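(* Consider the planted clique problem with $n\to\infty$, clique-size parameter $k=k_n$ and $\rho=k/n$. Suppose there is a fixed $\epsilon>0$ with $k\le n^{1/2-\epsilon}$ for all $n$, and $D=D_n$ satisfies $D=o\big((\log n/\log\log n)^2\big)$. Then $\mathrm{MMSE}_{\le D}\ge\rho-(1+o(1))\rho^2$.
   Context: Planted clique problem: $v\in\{0,1\}^n$ has i.i.d. $\mathrm{Bernoulli}(\rho)$ entries; conditionally on $v$, for each pair $i<j$ independently, $Y_{ij}=1$ if $v_iv_j=1$ and otherwise $Y_{ij}\sim\mathrm{Bernoulli}(1/2)$; the observation is $Y=(Y_{ij})_{i<j}$; the target is $x=v_1$. $\mathrm{MMSE}_{\le D}=\inf_f\mathbb{E}(f(Y)-x)^2$ over real polynomials $f$ of degree at most $D$ in the entries of $Y$. Asymptotic notation refers to $n\to\infty$. *)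

theory Defs
  imports Complex_Main "HOL-Library.Landau_Symbols"
begin

text \<open>Planted clique on vertex set {0..<n}; the paper's vertex 1 is vertex 0 here.
  The observation Y is encoded by the set E of pairs (i,j), i<j, with Y_ij = 1.
  The planted vector v is encoded by the set V of vertices with v_i = 1.\<close>

definition pc_pairs :: "nat \<Rightarrow> (nat \<times> nat) set" where
  "pc_pairs n = {(i, j). i < j \<and> j < n}"

definition pc_prob :: "nat \<Rightarrow> real \<Rightarrow> nat set \<Rightarrow> (nat \<times> nat) set \<Rightarrow> real" where
  "pc_prob n \<rho> V E =
     (\<Prod>i<n. if i \<in> V then \<rho> else 1 - \<rho>) *
     (\<Prod>(i, j)\<in>pc_pairs n.
        if i \<in> V \<and> j \<in> V then (if (i, j) \<in> E then 1 else 0) else 1 / 2)"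

definition pc_monomials :: "nat \<Rightarrow> nat \<Rightarrow> ((nat \<times> nat) \<Rightarrow> nat) set" where
  "pc_monomials n D =
     {\<alpha>. (\<forall>e. e \<notin> pc_pairs n \<longrightarrow> \<alpha> e = 0) \<and> (\<Sum>e\<in>pc_pairs n. \<alpha> e) \<le> D}"

definition pc_poly :: "nat \<Rightarrow> nat \<Rightarrow> (((nat \<times> nat) \<Rightarrow> nat) \<Rightarrow> real) \<Rightarrow> (nat \<times> nat) set \<Rightarrow> real" where
  "pc_poly n D c E =
     (\<Sum>\<alpha>\<in>pc_monomials n D. c \<alpha> * (\<Prod>e\<in>pc_pairs n. (if e \<in> E then 1 else 0) ^ \<alpha> e))"

definition pc_mse :: "nat \<Rightarrow> real \<Rightarrow> ((nat \<times> nat) set \<Rightarrow> real) \<Rightarrow> real" where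
  "pc_mse n \<rho> f =
     (\<Sum>V\<in>Pow {..<n}. \<Sum>E\<in>Pow (pc_pairs n).
        pc_prob n \<rho> V E * (f E - (if 0 \<in> V then 1 else 0))\<^sup>2)"

definition MMSE_le :: "nat \<Rightarrow> real \<Rightarrow> nat \<Rightarrow> real" where
  "MMSE_le n \<rho> D = (INF c. pc_mse n \<rho> (pc_poly n D c))"

end

theory Submission
  imports Defs "HOL-Analysis.Convex"
begin

text \<open>
  The squared error of an estimator \<open>f\<close> of \<open>v\<^sub>1\<close> is
  \<open>\<rho> E[(f - 1)\<^sup>2 | v\<^sub>1 = 1] + (1 - \<rho>) E[f\<^sup>2 | v\<^sub>1 = 0]\<close>, so it suffices to show
  \<open>E[f | v\<^sub>1 = 1]\<^sup>2 \<le> \<beta> E[f\<^sup>2 | v\<^sub>1 = 0]\<close> with \<open>\<beta> = 1 + o(1)\<close> for every \<open>f\<close> of degree at most \<open>D\<close>;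
  minimising a quadratic then gives the error bound \<open>\<rho> - \<beta> \<rho>\<^sup>2\<close>.

  The moment bound is proved by induction on the degree for an arbitrary set \<open>T\<close> of vertices.
  Expand \<open>f\<close> in the Walsh basis of the edges \<open>H\<close> incident to \<open>T\<close>, with coefficients \<open>f\<^sub>B\<close>
  that are polynomials of degree at most \<open>D - |B|\<close> in the remaining edges. Conditioning \<open>T\<close> into the
  clique plants the edges of \<open>H\<close> inside the clique, so
  \<open>E[f | T in clique] = \<Sum>\<^sub>B \<rho>\<^bsup>|N(B)|\<^esup> E[f\<^sub>B | N(B) in clique]\<close>, where \<open>N(B)\<close> are the other
  endpoints of \<open>B\<close>; conditioning \<open>T\<close> out of the clique makes the edges of \<open>H\<close> fair coins, so
  \<open>E[f\<^sup>2 | T out of clique] = \<Sum>\<^sub>B E[f\<^sub>B\<^sup>2]\<close>. Cauchy--Schwarz and induction then bound the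
  squared conditional mean by \<open>L\<^bsup>|T|\<^esup>\<close> times the second moment, provided
  \<open>\<Sum>\<^sub>B (\<rho>\<^sup>2 L)\<^bsup>|N(B)|\<^esup> \<le> ((1 - \<rho>) L)\<^bsup>|T|\<^esup>\<close>. Since at most \<open>exp (m sqrt D log (8 D\<^sup>2))\<close> edge sets
  of size \<open>\<le> D\<close> live on \<open>m \<le> 2D\<close> vertices, this holds once \<open>n \<rho>\<^sup>2 exp (2 sqrt D log (8 D\<^sup>2))\<close> is small,
  and \<open>k \<le> n\<^bsup>1/2 - \<epsilon>\<^esup>\<close> together with \<open>D = o((log n / log log n)\<^sup>2)\<close> make it at most \<open>n\<^bsup>-\<epsilon>\<^esup>\<close>.
\<close>

lemma sum_Pow_prod:
  fixes \<phi> :: "'a \<Rightarrow> bool \<Rightarrow> real"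
  assumes "finite H"
  shows "(\<Sum>E\<in>Pow H. \<Prod>e\<in>H. \<phi> e (e \<in> E)) = (\<Prod>e\<in>H. \<phi> e True + \<phi> e False)"
proof -
  have "(\<Prod>e\<in>H. \<phi> e True + \<phi> e False) =
        (\<Sum>X\<in>Pow H. (\<Prod>e\<in>X. \<phi> e True) * (\<Prod>e\<in>H-X. \<phi> e False))"
    by (rule prod_add[OF assms])
  also have "\<dots> = (\<Sum>E\<in>Pow H. \<Prod>e\<in>H. \<phi> e (e \<in> E))"
  proof (rule sum.cong)
    fix X assume X: "X \<in> Pow H"
    have "(\<Prod>e\<in>H. \<phi> e (e \<in> X)) = (\<Prod>e\<in>X. \<phi> e (e \<in> X)) * (\<Prod>e\<in>H-X. \<phi> e (e \<in> X))"
      by (subst prod.subset_diff[of X]) (use X assms in \<open>auto simp: mult.commute\<close>)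
    also have "\<dots> = (\<Prod>e\<in>X. \<phi> e True) * (\<Prod>e\<in>H-X. \<phi> e False)"
      by (simp add: prod.cong[OF refl, of "H-X" "\<lambda>e. \<phi> e (e \<in> X)" "\<lambda>e. \<phi> e False"])
    finally show "(\<Prod>e\<in>X. \<phi> e True) * (\<Prod>e\<in>H-X. \<phi> e False) = (\<Prod>e\<in>H. \<phi> e (e \<in> X))"
      by simp
  qed simp
  finally show ?thesis by simp
qed

lemma sum_Pow_Un:
  assumes "finite A" "finite B" "A \<inter> B = {}"
  shows "(\<Sum>E\<in>Pow (A \<union> B). F E) = (\<Sum>X\<in>Pow A. \<Sum>Y\<in>Pow B. F (X \<union> Y))"
proof -
  have "(\<Sum>X\<in>Pow A. \<Sum>Y\<in>Pow B. F (X \<union> Y)) = (\<Sum>p\<in>Pow A \<times> Pow B. F (fst p \<union> snd p))"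
    by (simp add: sum.cartesian_product case_prod_beta)
  also have "\<dots> = (\<Sum>E\<in>Pow (A \<union> B). F E)"
    by (rule sum.reindex_bij_witness[where j = "\<lambda>p. fst p \<union> snd p" and i = "\<lambda>E. (E \<inter> A, E \<inter> B)"])
       (use assms in auto)
  finally show ?thesis by simp
qed

lemma sum_Pow_power_card:
  fixes y :: real
  assumes "finite H"
  shows "(\<Sum>B\<in>Pow H. y ^ card B) = (1 + y) ^ card H"
  using prod_add[OF assms, of "\<lambda>_. y" "\<lambda>_. 1"] by (simp add: add.commute)

lemma prod_indicator:
  assumes "finite B"
  shows "(\<Prod>e\<in>B. if P e then 1 else 0 :: real) = (if \<forall>e\<in>B. P e then 1 else 0)"
proof (cases "\<forall>e\<in>B. P e")
  case True then show ?thesis by (auto intro!: prod.neutral)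
next
  case False
  then have "(\<Prod>e\<in>B. if P e then 1 else 0 :: real) = 0"
    using assms by (subst prod_zero_iff) auto
  with False show ?thesis by simp
qed

lemma sum_product_separate:
  fixes f g :: "'a \<Rightarrow> real"
  shows "(\<Sum>x\<in>A. \<Sum>y\<in>C. f x * g y * (\<Sum>b\<in>Bs. c b x * d b y)) =
         (\<Sum>b\<in>Bs. (\<Sum>x\<in>A. f x * c b x) * (\<Sum>y\<in>C. g y * d b y))"
proof -
  have "(\<Sum>x\<in>A. \<Sum>y\<in>C. f x * g y * (\<Sum>b\<in>Bs. c b x * d b y)) =
        (\<Sum>x\<in>A. \<Sum>y\<in>C. \<Sum>b\<in>Bs. (f x * c b x) * (g y * d b y))"
    by (simp add: sum_distrib_left mult_ac)
  also have "\<dots> = (\<Sum>x\<in>A. \<Sum>b\<in>Bs. \<Sum>y\<in>C. (f x * c b x) * (g y * d b y))"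
    by (rule sum.cong[OF refl], rule sum.swap)
  also have "\<dots> = (\<Sum>b\<in>Bs. \<Sum>x\<in>A. \<Sum>y\<in>C. (f x * c b x) * (g y * d b y))"
    by (rule sum.swap)
  also have "\<dots> = (\<Sum>b\<in>Bs. (\<Sum>x\<in>A. f x * c b x) * (\<Sum>y\<in>C. g y * d b y))"
    by (simp add: sum_product)
  finally show ?thesis .
qed

lemma sum_square_pairs:
  fixes u :: "'a \<Rightarrow> real"
  shows "(\<Sum>b\<in>Bs. u b)\<^sup>2 = (\<Sum>p\<in>Bs \<times> Bs. u (fst p) * u (snd p))"
  by (simp add: power2_eq_square sum_product sum.cartesian_product case_prod_beta)

lemma sum_product_diagonal:
  fixes f :: "'a \<Rightarrow> 'a \<Rightarrow> real"
  assumes "finite A"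
  shows "(\<Sum>p\<in>A \<times> A. (if fst p = snd p then 1 else 0) * f (fst p) (snd p)) = (\<Sum>a\<in>A. f a a)"
proof -
  have "(\<Sum>p\<in>A \<times> A. (if fst p = snd p then 1 else 0) * f (fst p) (snd p))
      = (\<Sum>a\<in>A. \<Sum>b\<in>A. if a = b then f a a else 0)"
    by (simp add: sum.cartesian_product) (intro sum.cong refl, auto)
  also have "\<dots> = (\<Sum>a\<in>A. f a a)" using assms by (simp add: sum.delta)
  finally show ?thesis .
qed

lemma Cauchy_Schwarz_sum_le:
  fixes c u v :: "'a \<Rightarrow> real"
  assumes "\<And>x. x \<in> A \<Longrightarrow> (c x)\<^sup>2 \<le> u x * v x" "\<And>x. x \<in> A \<Longrightarrow> u x \<ge> 0" "\<And>x. x \<in> A \<Longrightarrow> v x \<ge> 0"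
  shows "(\<Sum>x\<in>A. c x)\<^sup>2 \<le> (\<Sum>x\<in>A. u x) * (\<Sum>x\<in>A. v x)"
proof -
  have abs_le: "\<bar>c x\<bar> \<le> sqrt (u x) * sqrt (v x)" if "x \<in> A" for x
  proof -
    have "\<bar>c x\<bar> = sqrt ((c x)\<^sup>2)" by simp
    also have "\<dots> \<le> sqrt (u x * v x)" using assms(1)[OF that] real_sqrt_le_mono by blast
    finally show ?thesis using assms(2,3)[OF that] by (simp add: real_sqrt_mult)
  qed
  have "(\<Sum>x\<in>A. c x)\<^sup>2 \<le> (\<Sum>x\<in>A. \<bar>c x\<bar>)\<^sup>2"
    by (metis abs_ge_zero power2_abs power_mono sum_abs)
  also have "\<dots> \<le> (\<Sum>x\<in>A. sqrt (u x) * sqrt (v x))\<^sup>2"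
    by (intro power_mono sum_mono abs_le) (auto intro: sum_nonneg)
  also have "\<dots> \<le> (\<Sum>x\<in>A. (sqrt (u x))\<^sup>2) * (\<Sum>x\<in>A. (sqrt (v x))\<^sup>2)"
    by (rule Cauchy_Schwarz_ineq_sum)
  also have "\<dots> = (\<Sum>x\<in>A. u x) * (\<Sum>x\<in>A. v x)"
    using assms(2,3) by (simp cong: sum.cong)
  finally show ?thesis .
qed

section \<open>The planted clique model with vertex-dependent clique probabilities\<close>

definition edges :: "nat set \<Rightarrow> (nat \<times> nat) set" where
  "edges W = {(i, j). i < j \<and> i \<in> W \<and> j \<in> W}"

definition vertex_weight :: "nat set \<Rightarrow> (nat \<Rightarrow> real) \<Rightarrow> nat set \<Rightarrow> real" where
  "vertex_weight W q V = (\<Prod>i\<in>W. if i \<in> V then q i else 1 - q i)"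

definition edge_factor :: "nat set \<Rightarrow> (nat \<times> nat) set \<Rightarrow> nat \<times> nat \<Rightarrow> real" where
  "edge_factor V E e = (if fst e \<in> V \<and> snd e \<in> V then (if e \<in> E then 1 else 0) else 1 / 2)"

definition edge_weight :: "(nat \<times> nat) set \<Rightarrow> nat set \<Rightarrow> (nat \<times> nat) set \<Rightarrow> real" where
  "edge_weight F V E = (\<Prod>e\<in>F. edge_factor V E e)"

text \<open>Vertex \<open>i\<close> joins the clique with probability \<open>q i\<close>; probability \<open>1\<close> or \<open>0\<close> on a set \<open>T\<close>
  conditions on \<open>T\<close> lying inside or outside the clique.\<close>

definition pc_expect :: "nat set \<Rightarrow> (nat \<Rightarrow> real) \<Rightarrow> ((nat \<times> nat) set \<Rightarrow> real) \<Rightarrow> real" where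
  "pc_expect W q h =
     (\<Sum>V\<in>Pow W. vertex_weight W q V * (\<Sum>E\<in>Pow (edges W). edge_weight (edges W) V E * h E))"

definition forced_in :: "real \<Rightarrow> nat set \<Rightarrow> nat \<Rightarrow> real" where
  "forced_in \<rho> T = (\<lambda>i. if i \<in> T then 1 else \<rho>)"

definition forced_out :: "real \<Rightarrow> nat set \<Rightarrow> nat \<Rightarrow> real" where
  "forced_out \<rho> T = (\<lambda>i. if i \<in> T then 0 else \<rho>)"

lemma finite_edges [simp]: "finite W \<Longrightarrow> finite (edges W)"
  by (rule finite_subset[of _ "W \<times> W"]) (auto simp: edges_def)

lemma edges_mono: "A \<subseteq> B \<Longrightarrow> edges A \<subseteq> edges B"
  by (auto simp: edges_def)

lemma card_edges_le: "finite W \<Longrightarrow> card (edges W) \<le> (card W)\<^sup>2"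
  using card_mono[of "W \<times> W" "edges W"]
  by (auto simp: edges_def card_cartesian_product power2_eq_square)

lemma edge_weight_nonneg: "edge_weight F V E \<ge> 0"
  unfolding edge_weight_def edge_factor_def by (rule prod_nonneg) auto

lemma vertex_weight_nonneg: "(\<And>i. i \<in> W \<Longrightarrow> 0 \<le> q i \<and> q i \<le> 1) \<Longrightarrow> vertex_weight W q V \<ge> 0"
  unfolding vertex_weight_def by (rule prod_nonneg) auto

lemma vertex_weight_cong: "(\<And>i. i \<in> W \<Longrightarrow> q i = q' i) \<Longrightarrow> vertex_weight W q V = vertex_weight W q' V"
  unfolding vertex_weight_def by (rule prod.cong) auto

lemma sum_vertex_weight: "finite W \<Longrightarrow> (\<Sum>V\<in>Pow W. vertex_weight W q V) = 1"
  using sum_Pow_prod[of W "\<lambda>i b. if b then q i else 1 - q i"] by (simp add: vertex_weight_def)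

lemma sum_edge_weight:
  assumes "finite F"
  shows "(\<Sum>E\<in>Pow F. edge_weight F V E) = 1"
proof -
  let ?\<phi> = "\<lambda>e b. if fst e \<in> V \<and> snd e \<in> V then (if b then 1 else 0) else 1 / 2 :: real"
  have "(\<Sum>E\<in>Pow F. edge_weight F V E) = (\<Prod>e\<in>F. ?\<phi> e True + ?\<phi> e False)"
    unfolding edge_weight_def edge_factor_def by (rule sum_Pow_prod[OF assms])
  also have "\<dots> = 1" by (rule prod.neutral) auto
  finally show ?thesis .
qed

lemma pc_expect_double_sum:
  "pc_expect W q h = (\<Sum>V\<in>Pow W. \<Sum>E\<in>Pow (edges W). vertex_weight W q V * edge_weight (edges W) V E * h E)"
  by (simp add: pc_expect_def sum_distrib_left mult.assoc)

lemma pc_expect_add: "pc_expect W q (\<lambda>E. h E + g E) = pc_expect W q h + pc_expect W q g"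
  by (simp add: pc_expect_double_sum distrib_left sum.distrib)

lemma pc_expect_cmult: "pc_expect W q (\<lambda>E. c * h E) = c * pc_expect W q h"
  by (simp add: pc_expect_double_sum sum_distrib_left ac_simps)

lemma pc_expect_const:
  assumes "finite W"
  shows "pc_expect W q (\<lambda>E. c) = c"
  using assms by (simp add: pc_expect_def sum_distrib_right[symmetric] sum_edge_weight sum_vertex_weight)

lemma pc_expect_nonneg:
  assumes "\<And>i. i \<in> W \<Longrightarrow> 0 \<le> q i \<and> q i \<le> 1" "\<And>E. h E \<ge> 0"
  shows "pc_expect W q h \<ge> 0"
  unfolding pc_expect_double_sum
  by (intro sum_nonneg mult_nonneg_nonneg vertex_weight_nonneg edge_weight_nonneg assms)

lemma pc_expect_square_le:
  assumes "finite W" "\<And>i. i \<in> W \<Longrightarrow> 0 \<le> q i \<and> q i \<le> 1"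
  shows "(pc_expect W q h)\<^sup>2 \<le> pc_expect W q (\<lambda>E. (h E)\<^sup>2)"
proof -
  define m where "m = pc_expect W q h"
  have "0 \<le> pc_expect W q (\<lambda>E. (h E - m)\<^sup>2)" by (rule pc_expect_nonneg[OF assms(2)]) auto
  also have "pc_expect W q (\<lambda>E. (h E - m)\<^sup>2) = pc_expect W q (\<lambda>E. (h E)\<^sup>2 + ((-2*m) * h E + m\<^sup>2))"
    by (simp add: power2_eq_square algebra_simps)
  also have "\<dots> = pc_expect W q (\<lambda>E. (h E)\<^sup>2) + ((-2*m) * pc_expect W q h + m\<^sup>2)"
    by (simp only: pc_expect_add pc_expect_cmult pc_expect_const[OF assms(1)])
  finally show ?thesis by (simp add: m_def power2_eq_square)
qed

lemma pc_expect_shift: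
  assumes "finite W"
  shows "pc_expect W q (\<lambda>E. h E - c) = pc_expect W q h - c"
  using pc_expect_add[of W q h "\<lambda>_. - c"] pc_expect_const[OF assms, of q "- c"] by simp

lemma vertex_weight_split:
  assumes "finite W" "T \<subseteq> W" "X \<subseteq> T" "Y \<subseteq> W - T"
  shows "vertex_weight W q (X \<union> Y) = vertex_weight T q X * vertex_weight (W - T) q Y"
proof -
  have W: "W = T \<union> (W - T)" using assms by auto
  have "vertex_weight W q (X \<union> Y) = (\<Prod>i\<in>T \<union> (W - T). if i \<in> X \<union> Y then q i else 1 - q i)"
    unfolding vertex_weight_def using W by simp
  also have "\<dots> = (\<Prod>i\<in>T. if i \<in> X \<union> Y then q i else 1 - q i) * (\<Prod>i\<in>W - T. if i \<in> X \<union> Y then q i else 1 - q i)"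
    by (rule prod.union_disjoint) (use assms finite_subset in auto)
  also have "(\<Prod>i\<in>T. if i \<in> X \<union> Y then q i else 1 - q i) = vertex_weight T q X"
    unfolding vertex_weight_def by (rule prod.cong) (use assms in auto)
  also have "(\<Prod>i\<in>W - T. if i \<in> X \<union> Y then q i else 1 - q i) = vertex_weight (W - T) q Y"
    unfolding vertex_weight_def by (rule prod.cong) (use assms in auto)
  finally show ?thesis .
qed

lemma vertex_weight_01:
  assumes "\<And>i. i \<in> T \<Longrightarrow> q i = 0 \<or> q i = 1" "X \<subseteq> T" "finite T"
  shows "vertex_weight T q X = (if X = {i\<in>T. q i = 1} then 1 else 0)"
proof (cases "X = {i\<in>T. q i = 1}")
  case True
  have "vertex_weight T q X = 1" unfolding vertex_weight_def
  proof (rule prod.neutral, intro ballI)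
    fix i assume "i \<in> T" then show "(if i \<in> X then q i else 1 - q i) = 1"
      using assms(1)[of i] True by auto
  qed
  then show ?thesis using True by simp
next
  case False
  then obtain i where i: "i \<in> T" "(i \<in> X) \<noteq> (q i = 1)" using assms(2) by auto
  have "(if i \<in> X then q i else 1 - q i) = 0" using i assms(1)[OF i(1)] by auto
  then have "vertex_weight T q X = 0" unfolding vertex_weight_def
    using i(1) assms(3) by (subst prod_zero_iff) (auto split: if_splits)
  with False show ?thesis by simp
qed

lemma sum_vertex_weight_condition:
  assumes "finite W" "T \<subseteq> W" "\<And>i. i \<in> T \<Longrightarrow> q i = 0 \<or> q i = 1"
  shows "(\<Sum>V\<in>Pow W. vertex_weight W q V * F V) = (\<Sum>V\<in>Pow (W - T). vertex_weight (W - T) q V * F ({i\<in>T. q i = 1} \<union> V))"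
proof -
  let ?T1 = "{i\<in>T. q i = 1}"
  have fT: "finite T" using assms finite_subset by blast
  have W: "W = T \<union> (W - T)" using assms by auto
  have "(\<Sum>V\<in>Pow W. vertex_weight W q V * F V) = (\<Sum>V\<in>Pow (T \<union> (W - T)). vertex_weight W q V * F V)" using W by simp
  also have "\<dots> = (\<Sum>X\<in>Pow T. \<Sum>Y\<in>Pow (W - T). vertex_weight W q (X \<union> Y) * F (X \<union> Y))"
    by (rule sum_Pow_Un) (use assms fT in auto)
  also have "\<dots> = (\<Sum>X\<in>Pow T. if X = ?T1 then (\<Sum>Y\<in>Pow (W - T). vertex_weight (W - T) q Y * F (X \<union> Y)) else 0)"
  proof (rule sum.cong[OF refl])
    fix X assume X: "X \<in> Pow T"
    have "(\<Sum>Y\<in>Pow (W - T). vertex_weight W q (X \<union> Y) * F (X \<union> Y)) =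
          (\<Sum>Y\<in>Pow (W - T). vertex_weight T q X * (vertex_weight (W - T) q Y * F (X \<union> Y)))"
      by (rule sum.cong[OF refl]) (use X assms in \<open>simp add: vertex_weight_split\<close>)
    also have "\<dots> = vertex_weight T q X * (\<Sum>Y\<in>Pow (W - T). vertex_weight (W - T) q Y * F (X \<union> Y))"
      by (simp add: sum_distrib_left)
    finally show "(\<Sum>Y\<in>Pow (W - T). vertex_weight W q (X \<union> Y) * F (X \<union> Y)) =
       (if X = ?T1 then (\<Sum>Y\<in>Pow (W - T). vertex_weight (W - T) q Y * F (X \<union> Y)) else 0)"
      using X assms(3) fT by (simp add: vertex_weight_01)
  qed
  also have "\<dots> = (\<Sum>Y\<in>Pow (W - T). vertex_weight (W - T) q Y * F (?T1 \<union> Y))"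
    using fT by (simp add: sum.delta)
  finally show ?thesis .
qed

lemma edge_weight_split:
  assumes "finite W" "T \<subseteq> W" "X \<subseteq> edges W - edges (W - T)" "Y \<subseteq> edges (W - T)"
  shows "edge_weight (edges W) V (X \<union> Y) = edge_weight (edges W - edges (W - T)) V X * edge_weight (edges (W - T)) V Y"
proof -
  let ?H = "edges W - edges (W - T)"
  have sub: "edges (W - T) \<subseteq> edges W" by (rule edges_mono) auto
  have EW: "edges W = ?H \<union> edges (W - T)" using sub by auto
  have fin: "finite (edges W)" using assms by simp
  have "edge_weight (edges W) V (X \<union> Y) = (\<Prod>e\<in>?H \<union> edges (W - T). edge_factor V (X \<union> Y) e)"
    unfolding edge_weight_def using EW by simp
  also have "\<dots> = (\<Prod>e\<in>?H. edge_factor V (X \<union> Y) e) * (\<Prod>e\<in>edges (W - T). edge_factor V (X \<union> Y) e)"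
    by (rule prod.union_disjoint) (use fin sub finite_subset in auto)
  also have "(\<Prod>e\<in>?H. edge_factor V (X \<union> Y) e) = edge_weight ?H V X"
    unfolding edge_weight_def by (rule prod.cong) (use assms in \<open>auto simp: edge_factor_def\<close>)
  also have "(\<Prod>e\<in>edges (W - T). edge_factor V (X \<union> Y) e) = edge_weight (edges (W - T)) V Y"
    unfolding edge_weight_def by (rule prod.cong) (use assms in \<open>auto simp: edge_factor_def\<close>)
  finally show ?thesis .
qed

lemma sum_edge_weight_split:
  assumes "finite W" "T \<subseteq> W"
  shows "(\<Sum>E\<in>Pow (edges W). edge_weight (edges W) V E * F E) =
    (\<Sum>X\<in>Pow (edges W - edges (W - T)). \<Sum>Y\<in>Pow (edges (W - T)).
        edge_weight (edges W - edges (W - T)) V X * edge_weight (edges (W - T)) V Y * F (X \<union> Y))"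
proof -
  let ?H = "edges W - edges (W - T)"
  have sub: "edges (W - T) \<subseteq> edges W" by (rule edges_mono) auto
  have EW: "edges W = ?H \<union> edges (W - T)" using sub by auto
  have fin: "finite (edges W)" using assms by simp
  have "(\<Sum>E\<in>Pow (edges W). edge_weight (edges W) V E * F E) = (\<Sum>E\<in>Pow (?H \<union> edges (W - T)). edge_weight (edges W) V E * F E)"
    using EW by simp
  also have "\<dots> = (\<Sum>X\<in>Pow ?H. \<Sum>Y\<in>Pow (edges (W - T)). edge_weight (edges W) V (X \<union> Y) * F (X \<union> Y))"
    by (rule sum_Pow_Un) (use fin sub finite_subset in auto)
  also have "\<dots> = (\<Sum>X\<in>Pow ?H. \<Sum>Y\<in>Pow (edges (W - T)).
        edge_weight ?H V X * edge_weight (edges (W - T)) V Y * F (X \<union> Y))"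
    by (intro sum.cong refl) (use assms in \<open>simp add: edge_weight_split\<close>)
  finally show ?thesis .
qed

lemma edge_weight_restrict:
  assumes "\<And>e. e \<in> Es \<Longrightarrow> fst e \<notin> S \<and> snd e \<notin> S"
  shows "edge_weight Es (S \<union> V) E = edge_weight Es V E"
  unfolding edge_weight_def by (rule prod.cong) (use assms in \<open>auto simp: edge_factor_def\<close>)

lemma pc_expect_condition:
  assumes "finite W" "T \<subseteq> W" "\<And>i. i \<in> T \<Longrightarrow> q i = 0 \<or> q i = 1"
  shows "pc_expect W q h = (\<Sum>V\<in>Pow (W - T). vertex_weight (W - T) q V *
     (\<Sum>X\<in>Pow (edges W - edges (W - T)). \<Sum>Y\<in>Pow (edges (W - T)).
        edge_weight (edges W - edges (W - T)) ({i\<in>T. q i = 1} \<union> V) X * edge_weight (edges (W - T)) V Y * h (X \<union> Y)))"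
proof -
  have "pc_expect W q h = (\<Sum>V\<in>Pow (W - T). vertex_weight (W - T) q V *
      (\<Sum>E\<in>Pow (edges W). edge_weight (edges W) ({i\<in>T. q i = 1} \<union> V) E * h E))"
    unfolding pc_expect_def by (rule sum_vertex_weight_condition[OF assms])
  also have "\<dots> = (\<Sum>V\<in>Pow (W - T). vertex_weight (W - T) q V *
     (\<Sum>X\<in>Pow (edges W - edges (W - T)). \<Sum>Y\<in>Pow (edges (W - T)).
        edge_weight (edges W - edges (W - T)) ({i\<in>T. q i = 1} \<union> V) X * edge_weight (edges (W - T)) ({i\<in>T. q i = 1} \<union> V) Y * h (X \<union> Y)))"
    by (simp add: sum_edge_weight_split[OF assms(1,2)])
  also have "\<dots> = (\<Sum>V\<in>Pow (W - T). vertex_weight (W - T) q V *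
     (\<Sum>X\<in>Pow (edges W - edges (W - T)). \<Sum>Y\<in>Pow (edges (W - T)).
        edge_weight (edges W - edges (W - T)) ({i\<in>T. q i = 1} \<union> V) X * edge_weight (edges (W - T)) V Y * h (X \<union> Y)))"
    by (subst edge_weight_restrict) (auto simp: edges_def)
  finally show ?thesis .
qed

section \<open>Walsh expansion of edge polynomials\<close>

definition walsh :: "(nat \<times> nat) set \<Rightarrow> (nat \<times> nat) set \<Rightarrow> real" where
  "walsh B E = (\<Prod>e\<in>B. if e \<in> E then 1 else -1)"

text \<open>On \<open>0/1\<close>-valued edge variables the monomial \<open>\<Prod>e\<in>S. Y\<^sub>e\<close> is the indicator of \<open>S \<subseteq> E\<close>.\<close>

definition edge_poly :: "'i set \<Rightarrow> ('i \<Rightarrow> real) \<Rightarrow> ('i \<Rightarrow> (nat \<times> nat) set) \<Rightarrow> (nat \<times> nat) set \<Rightarrow> real" where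
  "edge_poly I a M E = (\<Sum>i\<in>I. a i * (if M i \<subseteq> E then 1 else 0))"

definition walsh_coeff :: "'i set \<Rightarrow> ('i \<Rightarrow> real) \<Rightarrow> ('i \<Rightarrow> (nat \<times> nat) set) \<Rightarrow> (nat \<times> nat) set
    \<Rightarrow> (nat \<times> nat) set \<Rightarrow> (nat \<times> nat) set \<Rightarrow> real" where
  "walsh_coeff I a M H B = edge_poly {i\<in>I. B \<subseteq> M i} (\<lambda>i. a i * (1 / 2) ^ card (M i \<inter> H)) (\<lambda>i. M i - H)"

lemma walsh_restrict:
  assumes "finite H" "B \<subseteq> H"
  shows "walsh B X = (\<Prod>e\<in>H. if e \<in> B then (if e \<in> X then 1 else -1) else 1)"
proof -
  have "walsh B X = (\<Prod>e\<in>H \<inter> B. if e \<in> X then 1 else -1)"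
  proof -
    have "H \<inter> B = B" using assms by auto
    then show ?thesis unfolding walsh_def by simp
  qed
  also have "\<dots> = (\<Prod>e\<in>H. if e \<in> B then (if e \<in> X then 1 else -1) else 1)"
    by (rule prod.inter_restrict[OF assms(1)])
  finally show ?thesis .
qed

lemma sum_edge_weight_walsh:
  assumes "finite H" "B \<subseteq> H"
  shows "(\<Sum>X\<in>Pow H. edge_weight H V X * walsh B X) = (if \<forall>e\<in>B. fst e \<in> V \<and> snd e \<in> V then 1 else 0)"
proof -
  define \<phi> where "\<phi> = (\<lambda>e b. (if fst e \<in> V \<and> snd e \<in> V then (if b then 1 else 0) else 1 / 2) *
      (if e \<in> B then (if b then 1 else -1) else (1::real)))"
  have "(\<Sum>X\<in>Pow H. edge_weight H V X * walsh B X) = (\<Sum>X\<in>Pow H. \<Prod>e\<in>H. \<phi> e (e \<in> X))"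
  proof (rule sum.cong[OF refl])
    fix X
    show "edge_weight H V X * walsh B X = (\<Prod>e\<in>H. \<phi> e (e \<in> X))"
      unfolding edge_weight_def walsh_restrict[OF assms] prod.distrib[symmetric] \<phi>_def edge_factor_def by simp
  qed
  also have "\<dots> = (\<Prod>e\<in>H. \<phi> e True + \<phi> e False)" by (rule sum_Pow_prod[OF assms(1)])
  also have "\<dots> = (\<Prod>e\<in>H. if e \<in> B then (if fst e \<in> V \<and> snd e \<in> V then 1 else 0) else 1)"
    by (rule prod.cong) (auto simp: \<phi>_def)
  also have "\<dots> = (\<Prod>e\<in>H \<inter> B. if fst e \<in> V \<and> snd e \<in> V then 1 else 0)"
    by (rule prod.inter_restrict[symmetric, OF assms(1)])
  also have "H \<inter> B = B" using assms by auto
  also have "(\<Prod>e\<in>B. if fst e \<in> V \<and> snd e \<in> V then 1 else 0) = (if \<forall>e\<in>B. fst e \<in> V \<and> snd e \<in> V then 1 else (0::real))"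
    by (rule prod_indicator) (use assms finite_subset in blast)
  finally show ?thesis .
qed

lemma sum_edge_weight_walsh_pair:
  assumes "finite H" "B \<subseteq> H" "B' \<subseteq> H" "\<And>e. e \<in> H \<Longrightarrow> \<not> (fst e \<in> V \<and> snd e \<in> V)"
  shows "(\<Sum>X\<in>Pow H. edge_weight H V X * (walsh B X * walsh B' X)) = (if B = B' then 1 else 0)"
proof -
  define \<phi> where "\<phi> = (\<lambda>e b. (1 / 2) *
      (if e \<in> B then (if b then 1 else -1) else (1::real)) * (if e \<in> B' then (if b then 1 else -1) else (1::real)))"
  have "(\<Sum>X\<in>Pow H. edge_weight H V X * (walsh B X * walsh B' X)) = (\<Sum>X\<in>Pow H. \<Prod>e\<in>H. \<phi> e (e \<in> X))"
  proof (rule sum.cong[OF refl])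
    fix X
    have "edge_weight H V X = (\<Prod>e\<in>H. 1 / 2)" unfolding edge_weight_def
      by (rule prod.cong) (use assms(4) in \<open>auto simp: edge_factor_def\<close>)
    then show "edge_weight H V X * (walsh B X * walsh B' X) = (\<Prod>e\<in>H. \<phi> e (e \<in> X))"
      unfolding walsh_restrict[OF assms(1,2)] walsh_restrict[OF assms(1,3)] \<phi>_def
      by (simp only: prod.distrib mult.assoc)
  qed
  also have "\<dots> = (\<Prod>e\<in>H. \<phi> e True + \<phi> e False)" by (rule sum_Pow_prod[OF assms(1)])
  also have "\<dots> = (\<Prod>e\<in>H. if (e \<in> B \<longleftrightarrow> e \<in> B') then 1 else 0)"
    by (rule prod.cong) (auto simp: \<phi>_def)
  also have "\<dots> = (if \<forall>e\<in>H. (e \<in> B \<longleftrightarrow> e \<in> B') then 1 else 0)"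
    by (rule prod_indicator[OF assms(1)])
  also have "(\<forall>e\<in>H. (e \<in> B \<longleftrightarrow> e \<in> B')) \<longleftrightarrow> B = B'" using assms(2,3) by auto
  finally show ?thesis .
qed

lemma indicator_subset_walsh:
  assumes "finite C"
  shows "(if C \<subseteq> X then 1 else 0 :: real) = (1 / 2) ^ card C * (\<Sum>B\<in>Pow C. walsh B X)"
proof -
  have "(\<Prod>e\<in>C. (if e \<in> X then 1 else -1) + 1) =
     (\<Sum>B\<in>Pow C. (\<Prod>e\<in>B. if e \<in> X then 1 else -1) * (\<Prod>e\<in>C - B. 1::real))"
    by (rule prod_add[OF assms])
  also have "\<dots> = (\<Sum>B\<in>Pow C. walsh B X)" by (simp add: walsh_def)
  finally have 1: "(\<Prod>e\<in>C. (if e \<in> X then 1 else -1) + 1) = (\<Sum>B\<in>Pow C. walsh B X)" .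
  have "(\<Prod>e\<in>C. (if e \<in> X then 1 else -1) + 1::real) = (\<Prod>e\<in>C. 2 * (if e \<in> X then 1 else 0))"
    by (rule prod.cong) auto
  also have "\<dots> = 2 ^ card C * (\<Prod>e\<in>C. if e \<in> X then 1 else 0)"
    by (simp add: prod.distrib)
  also have "\<dots> = 2 ^ card C * (if C \<subseteq> X then 1 else 0)"
    using prod_indicator[OF assms, of "\<lambda>e. e \<in> X"] by (simp add: subset_eq)
  finally have 2: "(\<Sum>B\<in>Pow C. walsh B X) = 2 ^ card C * (if C \<subseteq> X then 1 else 0)" using 1 by simp
  show ?thesis unfolding 2 by (simp add: power_one_over)
qed

lemma edge_poly_walsh_expansion:
  assumes "finite I" "finite H" "\<And>i. i \<in> I \<Longrightarrow> finite (M i) \<and> card (M i) \<le> d"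
    "X \<subseteq> H" "Y \<inter> H = {}"
  shows "edge_poly I a M (X \<union> Y) = (\<Sum>B\<in>{B\<in>Pow H. card B \<le> d}. walsh B X * walsh_coeff I a M H B Y)"
proof -
  let ?Bs = "{B\<in>Pow H. card B \<le> d}"
  have "edge_poly I a M (X \<union> Y) = (\<Sum>i\<in>I. a i * (if M i \<inter> H \<subseteq> X then 1 else 0) * (if M i - H \<subseteq> Y then 1 else 0))"
    unfolding edge_poly_def
  proof (rule sum.cong[OF refl])
    fix i
    have "M i \<subseteq> X \<union> Y \<longleftrightarrow> M i \<inter> H \<subseteq> X \<and> M i - H \<subseteq> Y" using assms(4,5) by blast
    then show "a i * (if M i \<subseteq> X \<union> Y then 1 else 0) =
        a i * (if M i \<inter> H \<subseteq> X then 1 else 0) * (if M i - H \<subseteq> Y then 1 else 0)" by simp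
  qed
  also have "\<dots> = (\<Sum>i\<in>I. \<Sum>B\<in>{B \<in> ?Bs. B \<subseteq> M i}. walsh B X * (a i * (1 / 2) ^ card (M i \<inter> H) * (if M i - H \<subseteq> Y then 1 else 0)))"
  proof (rule sum.cong[OF refl])
    fix i assume i: "i \<in> I"
    have fin: "finite (M i \<inter> H)" using assms(3)[OF i] by simp
    have P: "Pow (M i \<inter> H) = {B \<in> ?Bs. B \<subseteq> M i}"
    proof -
      have "card B \<le> d" if "B \<subseteq> M i" for B
        using card_mono[OF _ that] assms(3)[OF i] by force
      then show ?thesis by auto
    qed
    show "a i * (if M i \<inter> H \<subseteq> X then 1 else 0) * (if M i - H \<subseteq> Y then 1 else 0) =
      (\<Sum>B\<in>{B \<in> ?Bs. B \<subseteq> M i}. walsh B X * (a i * (1 / 2) ^ card (M i \<inter> H) * (if M i - H \<subseteq> Y then 1 else 0)))"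
      unfolding indicator_subset_walsh[OF fin, of X] P[symmetric] sum_distrib_right[symmetric]
      by (simp only: mult.commute mult.left_commute mult.assoc)
  qed
  also have "\<dots> = (\<Sum>B\<in>?Bs. \<Sum>i\<in>{i \<in> I. B \<subseteq> M i}. walsh B X * (a i * (1 / 2) ^ card (M i \<inter> H) * (if M i - H \<subseteq> Y then 1 else 0)))"
    by (rule sum.swap_restrict) (use assms in auto)
  also have "\<dots> = (\<Sum>B\<in>?Bs. walsh B X * walsh_coeff I a M H B Y)"
  proof (rule sum.cong[OF refl])
    fix B
    show "(\<Sum>i\<in>{i \<in> I. B \<subseteq> M i}. walsh B X * (a i * (1 / 2) ^ card (M i \<inter> H) * (if M i - H \<subseteq> Y then 1 else 0))) =
      walsh B X * walsh_coeff I a M H B Y"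
      unfolding walsh_coeff_def edge_poly_def by (subst sum_distrib_left) (rule refl)
  qed
  finally show ?thesis .
qed

section \<open>Conditioning a set of vertices in or out of the clique\<close>

definition touched :: "nat set \<Rightarrow> (nat \<times> nat) set \<Rightarrow> nat set" where
  "touched U B = {j \<in> U. \<exists>e\<in>B. fst e = j \<or> snd e = j}"

definition low_degree :: "nat set \<Rightarrow> nat \<Rightarrow> ((nat \<times> nat) set \<Rightarrow> real) set" where
  "low_degree W d = {edge_poly I a id | (I :: (nat \<times> nat) set set) a.
     finite I \<and> (\<forall>S\<in>I. S \<subseteq> edges W \<and> card S \<le> d)}"

lemma edge_poly_in_low_degree:
  assumes "finite I" "\<And>i. i \<in> I \<Longrightarrow> M i \<subseteq> edges W \<and> card (M i) \<le> d"
  shows "edge_poly I a M \<in> low_degree W d"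
proof -
  have "edge_poly I a M = edge_poly (M ` I) (\<lambda>S. \<Sum>i\<in>{i\<in>I. M i = S}. a i) id"
    unfolding edge_poly_def using assms(1)
    by (auto simp: sum.image_gen[of I _ M] sum_distrib_right intro!: sum.cong)
  then show ?thesis using assms unfolding low_degree_def by blast
qed

lemma card_touched_le:
  assumes "finite W" "B \<subseteq> edges W - edges (W - T)"
  shows "card (touched (W - T) B) \<le> card B"
proof -
  define other where "other = (\<lambda>e::nat \<times> nat. if fst e \<in> T then snd e else fst e)"
  have fB: "finite B" by (rule finite_subset[OF assms(2)]) (use assms(1) in simp)
  have "touched (W - T) B \<subseteq> other ` B"
  proof
    fix j assume "j \<in> touched (W - T) B"
    then obtain e where e: "e \<in> B" "fst e = j \<or> snd e = j" "j \<in> W - T" by (auto simp: touched_def)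
    then have "other e = j" using assms(2) by (auto simp: other_def edges_def)
    then show "j \<in> other ` B" using e(1) by blast
  qed
  then have "card (touched (W - T) B) \<le> card (other ` B)" using fB by (intro card_mono) auto
  also have "\<dots> \<le> card B" using fB by (rule card_image_le)
  finally show ?thesis .
qed

lemma subset_edges_touched:
  assumes "B \<subseteq> edges W - edges (W - T)"
  shows "B \<subseteq> edges (T \<union> touched (W - T) B)"
proof
  fix e assume e: "e \<in> B"
  then obtain i j where ij: "e = (i, j)" "i < j" "i \<in> W" "j \<in> W" using assms by (auto simp: edges_def)
  have "i \<in> T \<union> touched (W - T) B" "j \<in> T \<union> touched (W - T) B"
    using ij e by (auto simp: touched_def intro!: bexI[of _ e])
  then show "e \<in> edges (T \<union> touched (W - T) B)" using ij by (auto simp: edges_def)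
qed

lemma vertex_weight_subset_diff:
  "finite W \<Longrightarrow> U \<subseteq> W \<Longrightarrow> vertex_weight W q V = vertex_weight (W - U) q V * vertex_weight U q V"
  unfolding vertex_weight_def by (rule prod.subset_diff)

lemma vertex_weight_forced_in:
  assumes "finite W" "U \<subseteq> W"
  shows "vertex_weight W (\<lambda>_. \<rho>) V * (if U \<subseteq> V then 1 else 0) = \<rho> ^ card U * vertex_weight W (forced_in \<rho> U) V"
proof -
  have rest: "vertex_weight (W - U) (forced_in \<rho> U) V = vertex_weight (W - U) (\<lambda>_. \<rho>) V"
    by (rule vertex_weight_cong) (simp add: forced_in_def)
  have "vertex_weight U (\<lambda>_. \<rho>) V * (if U \<subseteq> V then 1 else 0) = \<rho> ^ card U * vertex_weight U (forced_in \<rho> U) V"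
  proof (cases "U \<subseteq> V")
    case True
    then show ?thesis by (auto simp: vertex_weight_def forced_in_def subset_eq intro!: prod.neutral)
  next
    case False
    then obtain i where i: "i \<in> U" "i \<notin> V" by auto
    have "finite U" using assms finite_subset by blast
    then have "vertex_weight U (forced_in \<rho> U) V = 0"
      unfolding vertex_weight_def using i by (subst prod_zero_iff) (auto simp: forced_in_def)
    with False show ?thesis by simp
  qed
  then show ?thesis
    by (simp add: vertex_weight_subset_diff[OF assms, of _ V] rest mult_ac)
qed

lemma vertex_weight_forced_out_le:
  assumes "finite W" "T \<subseteq> W" "0 \<le> \<rho>" "\<rho> \<le> 1"
  shows "(1 - \<rho>) ^ card T * vertex_weight W (forced_out \<rho> T) V \<le> vertex_weight W (\<lambda>_. \<rho>) V"
proof -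
  have rest: "vertex_weight (W - T) (forced_out \<rho> T) V = vertex_weight (W - T) (\<lambda>_. \<rho>) V"
    by (rule vertex_weight_cong) (simp add: forced_out_def)
  have "(1 - \<rho>) ^ card T * vertex_weight T (forced_out \<rho> T) V \<le> vertex_weight T (\<lambda>_. \<rho>) V"
  proof (cases "V \<inter> T = {}")
    case True
    have "vertex_weight T (\<lambda>_. \<rho>) V = (\<Prod>i\<in>T. 1 - \<rho>)"
      unfolding vertex_weight_def by (rule prod.cong) (use True in auto)
    moreover have "vertex_weight T (forced_out \<rho> T) V = 1"
      using True by (auto simp: vertex_weight_def forced_out_def intro!: prod.neutral)
    ultimately show ?thesis by simp
  next
    case False
    then obtain i where i: "i \<in> T" "i \<in> V" by auto
    have "finite T" using assms finite_subset by blast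
    then have "vertex_weight T (forced_out \<rho> T) V = 0"
      unfolding vertex_weight_def using i by (subst prod_zero_iff) (auto simp: forced_out_def)
    then show ?thesis using vertex_weight_nonneg[of T "\<lambda>_. \<rho>" V] assms by simp
  qed
  then have "vertex_weight (W - T) (\<lambda>_. \<rho>) V * ((1 - \<rho>) ^ card T * vertex_weight T (forced_out \<rho> T) V)
      \<le> vertex_weight (W - T) (\<lambda>_. \<rho>) V * vertex_weight T (\<lambda>_. \<rho>) V"
    by (rule mult_left_mono) (rule vertex_weight_nonneg, use assms in auto)
  then show ?thesis by (simp add: vertex_weight_subset_diff[OF assms(1,2), of _ V] rest mult_ac)
qed

lemma pc_expect_forced_out_le:
  assumes "finite W" "T \<subseteq> W" "0 \<le> \<rho>" "\<rho> \<le> 1" "\<And>E. h E \<ge> 0"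
  shows "(1 - \<rho>) ^ card T * pc_expect W (forced_out \<rho> T) h \<le> pc_expect W (\<lambda>_. \<rho>) h"
proof -
  have "(1 - \<rho>) ^ card T * pc_expect W (forced_out \<rho> T) h =
        (\<Sum>V\<in>Pow W. ((1 - \<rho>) ^ card T * vertex_weight W (forced_out \<rho> T) V) *
           (\<Sum>E\<in>Pow (edges W). edge_weight (edges W) V E * h E))"
    unfolding pc_expect_def by (simp add: sum_distrib_left mult.assoc)
  also have "\<dots> \<le> pc_expect W (\<lambda>_. \<rho>) h" unfolding pc_expect_def
    by (intro sum_mono mult_right_mono vertex_weight_forced_out_le assms sum_nonneg mult_nonneg_nonneg
        edge_weight_nonneg)
  finally show ?thesis .
qed

lemma edges_within_iff_touched:
  assumes "B \<subseteq> edges W - edges (W - T)"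
  shows "(\<forall>e\<in>B. fst e \<in> T \<union> V \<and> snd e \<in> T \<union> V) \<longleftrightarrow> touched (W - T) B \<subseteq> V"
  using assms by (fastforce simp: touched_def edges_def)

locale conditioning =
  fixes W T :: "nat set" and I :: "'i set" and a :: "'i \<Rightarrow> real" and M :: "'i \<Rightarrow> (nat \<times> nat) set"
    and d :: nat and \<rho> :: real
  assumes finite_W: "finite W" and T_subset: "T \<subseteq> W" and finite_I: "finite I"
    and M_low_degree: "\<And>i. i \<in> I \<Longrightarrow> M i \<subseteq> edges W \<and> card (M i) \<le> d"
begin

abbreviation "W' \<equiv> W - T"
abbreviation "H \<equiv> edges W - edges W'"
abbreviation "Bs \<equiv> {B\<in>Pow H. card B \<le> d}"
abbreviation "g \<equiv> edge_poly I a M"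
abbreviation "gb B \<equiv> walsh_coeff I a M H B"

lemma finite_H: "finite H" using finite_W by simp
lemma finite_Bs: "finite Bs" using finite_H by simp

lemma walsh_expansion:
  assumes "X \<in> Pow H" "Y \<in> Pow (edges W')"
  shows "g (X \<union> Y) = (\<Sum>B\<in>Bs. walsh B X * gb B Y)"
proof (rule edge_poly_walsh_expansion[OF finite_I finite_H])
  fix i assume "i \<in> I"
  then show "finite (M i) \<and> card (M i) \<le> d"
    using M_low_degree finite_W finite_subset[of "M i" "edges W"] by auto
qed (use assms in auto)

text \<open>Conditioning \<open>T\<close> into the clique plants the edges of \<open>H\<close> towards clique vertices and leaves
  the others fair, so the Walsh character of \<open>B\<close> averages to the indicator that \<open>touched W' B\<close>
  lies in the clique.\<close>

lemma sum_edges_forced_in: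
  "(\<Sum>X\<in>Pow H. \<Sum>Y\<in>Pow (edges W'). edge_weight H (T \<union> V) X * edge_weight (edges W') V Y * g (X \<union> Y))
    = (\<Sum>B\<in>Bs. (if touched W' B \<subseteq> V then 1 else 0) * (\<Sum>Y\<in>Pow (edges W'). edge_weight (edges W') V Y * gb B Y))"
proof -
  have "(\<Sum>X\<in>Pow H. \<Sum>Y\<in>Pow (edges W'). edge_weight H (T \<union> V) X * edge_weight (edges W') V Y * g (X \<union> Y))
      = (\<Sum>X\<in>Pow H. \<Sum>Y\<in>Pow (edges W'). edge_weight H (T \<union> V) X * edge_weight (edges W') V Y
          * (\<Sum>B\<in>Bs. walsh B X * gb B Y))"
    by (intro sum.cong refl) (simp add: walsh_expansion)
  also have "\<dots> = (\<Sum>B\<in>Bs. (\<Sum>X\<in>Pow H. edge_weight H (T \<union> V) X * walsh B X)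
      * (\<Sum>Y\<in>Pow (edges W'). edge_weight (edges W') V Y * gb B Y))"
    by (rule sum_product_separate)
  also have "\<dots> = (\<Sum>B\<in>Bs. (if touched W' B \<subseteq> V then 1 else 0)
      * (\<Sum>Y\<in>Pow (edges W'). edge_weight (edges W') V Y * gb B Y))"
  proof (intro sum.cong refl)
    fix B assume "B \<in> Bs"
    then show "(\<Sum>X\<in>Pow H. edge_weight H (T \<union> V) X * walsh B X) * (\<Sum>Y\<in>Pow (edges W'). edge_weight (edges W') V Y * gb B Y)
      = (if touched W' B \<subseteq> V then 1 else 0) * (\<Sum>Y\<in>Pow (edges W'). edge_weight (edges W') V Y * gb B Y)"
      using edges_within_iff_touched[of B W T V] by (simp add: sum_edge_weight_walsh[OF finite_H])
  qed
  finally show ?thesis .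
qed

lemma pc_expect_forced_in_walsh:
  "pc_expect W (forced_in \<rho> T) g
    = (\<Sum>B\<in>Bs. \<rho> ^ card (touched W' B) * pc_expect W' (forced_in \<rho> (touched W' B)) (gb B))"
proof -
  have T1: "{i\<in>T. forced_in \<rho> T i = 1} = T" by (auto simp: forced_in_def)
  have rest: "vertex_weight W' (forced_in \<rho> T) = vertex_weight W' (\<lambda>_. \<rho>)"
    by (rule ext, rule vertex_weight_cong) (simp add: forced_in_def)
  have T01: "\<And>i. i \<in> T \<Longrightarrow> forced_in \<rho> T i = 0 \<or> forced_in \<rho> T i = 1"
    by (simp add: forced_in_def)
  have "pc_expect W (forced_in \<rho> T) g = (\<Sum>V\<in>Pow W'. vertex_weight W' (\<lambda>_. \<rho>) V *
      (\<Sum>B\<in>Bs. (if touched W' B \<subseteq> V then 1 else 0) * (\<Sum>Y\<in>Pow (edges W'). edge_weight (edges W') V Y * gb B Y)))"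
    using pc_expect_condition[OF finite_W T_subset T01, where h = g] by (simp add: T1 rest sum_edges_forced_in)
  also have "\<dots> = (\<Sum>B\<in>Bs. \<Sum>V\<in>Pow W'. (vertex_weight W' (\<lambda>_. \<rho>) V * (if touched W' B \<subseteq> V then 1 else 0))
      * (\<Sum>Y\<in>Pow (edges W'). edge_weight (edges W') V Y * gb B Y))"
    by (simp add: sum_distrib_left mult.assoc sum.swap[of _ "Pow W'"])
  also have "\<dots> = (\<Sum>B\<in>Bs. \<Sum>V\<in>Pow W'. (\<rho> ^ card (touched W' B) * vertex_weight W' (forced_in \<rho> (touched W' B)) V)
      * (\<Sum>Y\<in>Pow (edges W'). edge_weight (edges W') V Y * gb B Y))"
    by (intro sum.cong refl arg_cong2[where f = "(*)"] vertex_weight_forced_in)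
       (use finite_W in \<open>auto simp: touched_def\<close>)
  also have "\<dots> = (\<Sum>B\<in>Bs. \<rho> ^ card (touched W' B) * pc_expect W' (forced_in \<rho> (touched W' B)) (gb B))"
    unfolding pc_expect_def by (simp add: sum_distrib_left mult.assoc)
  finally show ?thesis .
qed

text \<open>With \<open>T\<close> outside the clique the edges of \<open>H\<close> are fair coins, so the Walsh characters on \<open>H\<close>
  are orthonormal and the cross terms vanish.\<close>

lemma sum_edges_forced_out_square:
  assumes "V \<subseteq> W'"
  shows "(\<Sum>X\<in>Pow H. \<Sum>Y\<in>Pow (edges W'). edge_weight H V X * edge_weight (edges W') V Y * (g (X \<union> Y))\<^sup>2)
    = (\<Sum>B\<in>Bs. \<Sum>Y\<in>Pow (edges W'). edge_weight (edges W') V Y * (gb B Y)\<^sup>2)"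
proof -
  have fair: "\<not> (fst e \<in> V \<and> snd e \<in> V)" if "e \<in> H" for e
    using that assms by (auto simp: edges_def)
  have "(\<Sum>X\<in>Pow H. \<Sum>Y\<in>Pow (edges W'). edge_weight H V X * edge_weight (edges W') V Y * (g (X \<union> Y))\<^sup>2)
      = (\<Sum>X\<in>Pow H. \<Sum>Y\<in>Pow (edges W'). edge_weight H V X * edge_weight (edges W') V Y *
          (\<Sum>p\<in>Bs \<times> Bs. (walsh (fst p) X * walsh (snd p) X) * (gb (fst p) Y * gb (snd p) Y)))"
    by (intro sum.cong refl) (simp add: walsh_expansion sum_square_pairs mult_ac)
  also have "\<dots> = (\<Sum>p\<in>Bs \<times> Bs. (\<Sum>X\<in>Pow H. edge_weight H V X * (walsh (fst p) X * walsh (snd p) X)) *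
      (\<Sum>Y\<in>Pow (edges W'). edge_weight (edges W') V Y * (gb (fst p) Y * gb (snd p) Y)))"
    by (rule sum_product_separate)
  also have "\<dots> = (\<Sum>p\<in>Bs \<times> Bs. (if fst p = snd p then 1 else 0) *
      (\<Sum>Y\<in>Pow (edges W'). edge_weight (edges W') V Y * (gb (fst p) Y * gb (snd p) Y)))"
    by (intro sum.cong refl) (subst sum_edge_weight_walsh_pair[OF finite_H _ _ fair], auto)
  also have "\<dots> = (\<Sum>B\<in>Bs. \<Sum>Y\<in>Pow (edges W'). edge_weight (edges W') V Y * (gb B Y * gb B Y))"
    by (rule sum_product_diagonal[OF finite_Bs])
  finally show ?thesis by (simp add: power2_eq_square)
qed

lemma pc_expect_forced_out_square:
  "pc_expect W (forced_out \<rho> T) (\<lambda>E. (g E)\<^sup>2) = (\<Sum>B\<in>Bs. pc_expect W' (\<lambda>_. \<rho>) (\<lambda>E. (gb B E)\<^sup>2))"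
proof -
  have T1: "{i\<in>T. forced_out \<rho> T i = 1} = {}" by (auto simp: forced_out_def)
  have rest: "vertex_weight W' (forced_out \<rho> T) = vertex_weight W' (\<lambda>_. \<rho>)"
    by (rule ext, rule vertex_weight_cong) (simp add: forced_out_def)
  have T01: "\<And>i. i \<in> T \<Longrightarrow> forced_out \<rho> T i = 0 \<or> forced_out \<rho> T i = 1"
    by (simp add: forced_out_def)
  have "pc_expect W (forced_out \<rho> T) (\<lambda>E. (g E)\<^sup>2) = (\<Sum>V\<in>Pow W'. vertex_weight W' (\<lambda>_. \<rho>) V *
      (\<Sum>B\<in>Bs. \<Sum>Y\<in>Pow (edges W'). edge_weight (edges W') V Y * (gb B Y)\<^sup>2))"
    using pc_expect_condition[OF finite_W T_subset T01, where h = "\<lambda>E. (g E)\<^sup>2"]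
    by (simp add: T1 rest sum_edges_forced_out_square)
  also have "\<dots> = (\<Sum>B\<in>Bs. pc_expect W' (\<lambda>_. \<rho>) (\<lambda>E. (gb B E)\<^sup>2))"
    unfolding pc_expect_def by (simp add: sum_distrib_left sum.swap[of _ "Pow W'"])
  finally show ?thesis .
qed

lemma walsh_coeff_low_degree:
  assumes B: "B \<in> Bs"
  shows "gb B \<in> low_degree W' (d - card B)"
  unfolding walsh_coeff_def
proof (rule edge_poly_in_low_degree)
  fix i assume i: "i \<in> {i\<in>I. B \<subseteq> M i}"
  have Mi: "M i \<subseteq> edges W" "card (M i) \<le> d" using M_low_degree i by auto
  have finM: "finite (M i)" using Mi finite_W finite_subset[of "M i" "edges W"] by auto
  have "card (M i - H) = card (M i) - card (M i \<inter> H)"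
    using finM by (simp add: card_Diff_subset_Int)
  moreover have "card B \<le> card (M i \<inter> H)"
    using B i finM by (intro card_mono) auto
  ultimately show "M i - H \<subseteq> edges W' \<and> card (M i - H) \<le> d - card B" using Mi by auto
qed (use finite_I in simp)

text \<open>The inductive step: Cauchy--Schwarz over the Walsh coefficients \<open>gb B\<close>, whose conditional
  moments are controlled by the hypothesis at the smaller degree \<open>d - card B\<close>.\<close>

lemma pc_expect_forced_in_square_le:
  assumes "0 \<le> \<rho>" "\<rho> \<le> 1" "L \<ge> 0"
    and coeff_bound: "\<And>B. B \<in> Bs \<Longrightarrow>
      (pc_expect W' (forced_in \<rho> (touched W' B)) (gb B))\<^sup>2
        \<le> L ^ card (touched W' B) * pc_expect W' (\<lambda>_. \<rho>) (\<lambda>E. (gb B E)\<^sup>2)"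
  shows "(pc_expect W (forced_in \<rho> T) g)\<^sup>2
    \<le> (\<Sum>B\<in>Bs. (\<rho>\<^sup>2 * L) ^ card (touched W' B)) * pc_expect W (forced_out \<rho> T) (\<lambda>E. (g E)\<^sup>2)"
proof -
  have "(pc_expect W (forced_in \<rho> T) g)\<^sup>2
      = (\<Sum>B\<in>Bs. \<rho> ^ card (touched W' B) * pc_expect W' (forced_in \<rho> (touched W' B)) (gb B))\<^sup>2"
    by (simp add: pc_expect_forced_in_walsh)
  also have "\<dots> \<le> (\<Sum>B\<in>Bs. (\<rho>\<^sup>2 * L) ^ card (touched W' B)) * (\<Sum>B\<in>Bs. pc_expect W' (\<lambda>_. \<rho>) (\<lambda>E. (gb B E)\<^sup>2))"
  proof (rule Cauchy_Schwarz_sum_le)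
    fix B assume B: "B \<in> Bs"
    have "(\<rho> ^ card (touched W' B) * pc_expect W' (forced_in \<rho> (touched W' B)) (gb B))\<^sup>2
        = (\<rho> ^ card (touched W' B))\<^sup>2 * (pc_expect W' (forced_in \<rho> (touched W' B)) (gb B))\<^sup>2"
      by (simp add: power_mult_distrib)
    also have "\<dots> \<le> (\<rho> ^ card (touched W' B))\<^sup>2 * (L ^ card (touched W' B) * pc_expect W' (\<lambda>_. \<rho>) (\<lambda>E. (gb B E)\<^sup>2))"
      by (intro mult_left_mono coeff_bound B) simp
    also have "\<dots> = (\<rho>\<^sup>2 * L) ^ card (touched W' B) * pc_expect W' (\<lambda>_. \<rho>) (\<lambda>E. (gb B E)\<^sup>2)"
      by (simp add: power_mult_distrib power2_eq_square mult.assoc)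
    finally show "(\<rho> ^ card (touched W' B) * pc_expect W' (forced_in \<rho> (touched W' B)) (gb B))\<^sup>2
        \<le> (\<rho>\<^sup>2 * L) ^ card (touched W' B) * pc_expect W' (\<lambda>_. \<rho>) (\<lambda>E. (gb B E)\<^sup>2)" .
    show "0 \<le> (\<rho>\<^sup>2 * L) ^ card (touched W' B)" using assms by simp
    show "0 \<le> pc_expect W' (\<lambda>_. \<rho>) (\<lambda>E. (gb B E)\<^sup>2)" by (rule pc_expect_nonneg) (use assms in auto)
  qed
  also have "(\<Sum>B\<in>Bs. pc_expect W' (\<lambda>_. \<rho>) (\<lambda>E. (gb B E)\<^sup>2)) = pc_expect W (forced_out \<rho> T) (\<lambda>E. (g E)\<^sup>2)"
    by (simp add: pc_expect_forced_out_square)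
  finally show ?thesis .
qed

end

section \<open>Induction on the degree\<close>

lemma forced_in_empty [simp]: "forced_in \<rho> {} = (\<lambda>_. \<rho>)"
  by (simp add: forced_in_def)

lemma low_degree_conditional_bound:
  fixes n Dmax :: nat and \<rho> L :: real
  assumes \<rho>: "0 \<le> \<rho>" "\<rho> \<le> 1" and L: "L \<ge> 0"
    and touched_sum: "\<And>W T d. finite W \<Longrightarrow> card W \<le> n \<Longrightarrow> T \<subseteq> W \<Longrightarrow> T \<noteq> {} \<Longrightarrow>
      card T \<le> Dmax \<Longrightarrow> d \<le> Dmax \<Longrightarrow>
      (\<Sum>B\<in>{B\<in>Pow (edges W - edges (W - T)). card B \<le> d}. (\<rho>\<^sup>2 * L) ^ card (touched (W - T) B))
        \<le> (1 - \<rho>) ^ card T * L ^ card T"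
  assumes "d \<le> Dmax" "finite W" "card W \<le> n" "T \<subseteq> W" "card T \<le> Dmax" "h \<in> low_degree W d"
  shows "(pc_expect W (forced_in \<rho> T) h)\<^sup>2 \<le> L ^ card T * pc_expect W (\<lambda>_. \<rho>) (\<lambda>E. (h E)\<^sup>2)"
  using assms(5-)
proof (induction d arbitrary: W T h rule: less_induct)
  case (less d W T h)
  obtain I :: "(nat \<times> nat) set set" and a where h: "h = edge_poly I a id" "finite I"
    and I: "\<forall>S\<in>I. S \<subseteq> edges W \<and> card S \<le> d"
    using less.prems(6) by (auto simp: low_degree_def)
  show ?case
  proof (cases "T = {}")
    case True
    then show ?thesis using pc_expect_square_le[of W "\<lambda>_. \<rho>" h] less.prems(2) \<rho> by simp
  next
    case False
    interpret conditioning W T I a id d \<rho>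
      by unfold_locales (use less.prems h I in auto)
    have coeff_bound: "(pc_expect W' (forced_in \<rho> (touched W' B)) (gb B))\<^sup>2
        \<le> L ^ card (touched W' B) * pc_expect W' (\<lambda>_. \<rho>) (\<lambda>E. (gb B E)\<^sup>2)" if B: "B \<in> Bs" for B
    proof (cases "touched W' B = {}")
      case True
      then show ?thesis using pc_expect_square_le[of W' "\<lambda>_. \<rho>" "gb B"] finite_W \<rho> by simp
    next
      case False
      then have "card B \<ge> 1"
        using B finite_H finite_subset by (fastforce simp: touched_def Suc_le_eq card_gt_0_iff)
      moreover have "card (touched W' B) \<le> card B"
        using card_touched_le[OF finite_W] B by auto
      ultimately show ?thesis
        using B less.prems card_mono[OF finite_W, of W']
        by (intro less.IH[of "d - card B"] walsh_coeff_low_degree) (auto simp: touched_def)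
    qed
    have "(pc_expect W (forced_in \<rho> T) g)\<^sup>2
        \<le> (\<Sum>B\<in>Bs. (\<rho>\<^sup>2 * L) ^ card (touched W' B)) * pc_expect W (forced_out \<rho> T) (\<lambda>E. (g E)\<^sup>2)"
      by (rule pc_expect_forced_in_square_le) (use \<rho> L coeff_bound in auto)
    also have "\<dots> \<le> ((1 - \<rho>) ^ card T * L ^ card T) * pc_expect W (forced_out \<rho> T) (\<lambda>E. (g E)\<^sup>2)"
      by (intro mult_right_mono touched_sum pc_expect_nonneg)
         (use less.prems False \<rho> in \<open>auto simp: forced_out_def\<close>)
    also have "\<dots> = L ^ card T * ((1 - \<rho>) ^ card T * pc_expect W (forced_out \<rho> T) (\<lambda>E. (g E)\<^sup>2))"
      by simp
    also have "\<dots> \<le> L ^ card T * pc_expect W (\<lambda>_. \<rho>) (\<lambda>E. (g E)\<^sup>2)"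
      by (intro mult_left_mono pc_expect_forced_out_le) (use less.prems \<rho> L in auto)
    finally show ?thesis by (simp add: h(1))
  qed
qed

section \<open>Counting Walsh coefficients by the vertices they touch\<close>

lemma sum_touched_power_le_sum_subsets:
  fixes y :: real
  assumes W: "finite W" "T \<subseteq> W" and y: "y \<ge> 0"
  shows "(\<Sum>B\<in>{B\<in>Pow (edges W - edges (W - T)). card B \<le> d}. y ^ card (touched (W - T) B))
    \<le> (\<Sum>U\<in>{U\<in>Pow (W - T). card U \<le> d}. real (card {B\<in>Pow (edges (T \<union> U)). card B \<le> d}) * y ^ card U)"
proof -
  let ?Bs = "{B\<in>Pow (edges W - edges (W - T)). card B \<le> d}"
  let ?Us = "{U\<in>Pow (W - T). card U \<le> d}"
  let ?F = "\<lambda>U. {B\<in>Pow (edges (T \<union> U)). card B \<le> d}"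
  define f where "f = (\<lambda>B. (touched (W - T) B, B))"
  have finF: "finite (?F U)" if "U \<subseteq> W" for U
    using W that finite_subset[of "T \<union> U" W] by auto
  have finS: "finite (Sigma ?Us ?F)"
    by (rule finite_SigmaI) (use W finF in auto)
  have inj: "inj_on f ?Bs" by (auto simp: f_def inj_on_def)
  have img: "f ` ?Bs \<subseteq> Sigma ?Us ?F"
  proof
    fix p assume "p \<in> f ` ?Bs"
    then obtain B where B: "B \<in> ?Bs" "p = f B" by auto
    have "card (touched (W - T) B) \<le> d" using card_touched_le[OF W(1), of B T] B by auto
    moreover have "touched (W - T) B \<subseteq> W - T" by (auto simp: touched_def)
    moreover have "B \<subseteq> edges (T \<union> touched (W - T) B)" using subset_edges_touched[of B W T] B by auto
    ultimately show "p \<in> Sigma ?Us ?F" using B by (auto simp: f_def)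
  qed
  have "(\<Sum>B\<in>?Bs. y ^ card (touched (W - T) B)) = (\<Sum>p\<in>f ` ?Bs. y ^ card (fst p))"
    by (subst sum.reindex[OF inj]) (simp add: f_def)
  also have "\<dots> \<le> (\<Sum>p\<in>Sigma ?Us ?F. y ^ card (fst p))"
    by (rule sum_mono2[OF finS img]) (use y in auto)
  also have "\<dots> = (\<Sum>U\<in>?Us. \<Sum>B\<in>?F U. y ^ card U)"
    by (subst sum.Sigma) (use W finF in \<open>auto simp: case_prod_beta\<close>)
  finally show ?thesis by simp
qed

lemma sum_touched_power_le:
  fixes y L0 :: real and D1 n d :: nat
  assumes W: "finite W" "card W \<le> n" "T \<subseteq> W" and "d \<le> D1" "card T \<le> D1"
    and y: "y \<ge> 0" and L0: "L0 \<ge> 0"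
    and count: "\<And>(X :: (nat \<times> nat) set) m. finite X \<Longrightarrow> card X \<le> m\<^sup>2 \<Longrightarrow> m \<le> 2 * D1 \<Longrightarrow>
      real (card {B\<in>Pow X. card B \<le> d}) \<le> L0 ^ m"
  shows "(\<Sum>B\<in>{B\<in>Pow (edges W - edges (W - T)). card B \<le> d}. y ^ card (touched (W - T) B))
    \<le> L0 ^ card T * (1 + y * L0) ^ n"
proof -
  have fT: "finite T" using W finite_subset by blast
  have "(\<Sum>B\<in>{B\<in>Pow (edges W - edges (W - T)). card B \<le> d}. y ^ card (touched (W - T) B))
    \<le> (\<Sum>U\<in>{U\<in>Pow (W - T). card U \<le> d}. real (card {B\<in>Pow (edges (T \<union> U)). card B \<le> d}) * y ^ card U)"
    by (rule sum_touched_power_le_sum_subsets[OF W(1,3) y])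
  also have "\<dots> \<le> (\<Sum>U\<in>{U\<in>Pow (W - T). card U \<le> d}. L0 ^ (card T + card U) * y ^ card U)"
  proof (rule sum_mono)
    fix U assume U: "U \<in> {U\<in>Pow (W - T). card U \<le> d}"
    have fU: "finite U" using U W finite_subset by auto
    have cTU: "card (T \<union> U) = card T + card U"
      using U fT fU by (subst card_Un_disjoint) auto
    have "real (card {B\<in>Pow (edges (T \<union> U)). card B \<le> d}) \<le> L0 ^ (card T + card U)"
      by (rule count) (use fT fU cTU card_edges_le[of "T \<union> U"] U assms in auto)
    then show "real (card {B\<in>Pow (edges (T \<union> U)). card B \<le> d}) * y ^ card U
        \<le> L0 ^ (card T + card U) * y ^ card U"
      using y by (intro mult_right_mono) auto
  qed
  also have "\<dots> \<le> (\<Sum>U\<in>Pow (W - T). L0 ^ (card T + card U) * y ^ card U)"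
    by (rule sum_mono2) (use W y L0 in auto)
  also have "\<dots> = L0 ^ card T * (1 + y * L0) ^ card (W - T)"
    using W by (simp add: sum_distrib_left power_add power_mult_distrib mult_ac
        flip: sum_Pow_power_card)
  also have "\<dots> \<le> L0 ^ card T * (1 + y * L0) ^ n"
    using W card_mono[OF W(1), of "W - T"] y L0 by (intro mult_left_mono power_increasing) auto
  finally show ?thesis .
qed

lemma inj_on_snd_star: "inj_on snd (edges W - edges (W - {0}))"
  by (rule inj_onI) (auto simp: edges_def prod_eq_iff)

lemma touched_star:
  assumes "B \<subseteq> edges W - edges (W - {0})"
  shows "touched (W - {0}) B = snd ` B"
  using assms by (force simp: touched_def edges_def)

lemma sum_touched_power_star_le:
  fixes y :: real and n :: nat
  assumes W: "finite W" "card W \<le> n" and y: "y \<ge> 0"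
  shows "(\<Sum>B\<in>{B\<in>Pow (edges W - edges (W - {0})). card B \<le> d}. y ^ card (touched (W - {0}) B)) \<le> (1 + y) ^ n"
proof -
  let ?H = "edges W - edges (W - {0})"
  have "(\<Sum>B\<in>{B\<in>Pow ?H. card B \<le> d}. y ^ card (touched (W - {0}) B)) = (\<Sum>B\<in>{B\<in>Pow ?H. card B \<le> d}. y ^ card B)"
    using inj_on_snd_star[of W] by (intro sum.cong) (auto simp: touched_star card_image inj_on_subset)
  also have "\<dots> \<le> (\<Sum>B\<in>Pow ?H. y ^ card B)"
    by (rule sum_mono2) (use W y in auto)
  also have "\<dots> = (1 + y) ^ card ?H" by (rule sum_Pow_power_card) (use W in simp)
  also have "\<dots> \<le> (1 + y) ^ n"
  proof -
    have "card ?H \<le> card W"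
      by (rule card_inj_on_le[OF inj_on_snd_star]) (auto simp: W edges_def)
    then show ?thesis using W y by (intro power_increasing) auto
  qed
  finally show ?thesis .
qed

section \<open>The bound at a fixed size\<close>

lemma pc_pairs_eq_edges: "pc_pairs n = edges {..<n}"
  by (auto simp: pc_pairs_def edges_def)

lemma pc_prob_eq: "pc_prob n \<rho> V E = vertex_weight {..<n} (\<lambda>_. \<rho>) V * edge_weight (edges {..<n}) V E"
proof -
  have "(\<Prod>(i, j)\<in>edges {..<n}. if i \<in> V \<and> j \<in> V then (if (i, j) \<in> E then 1 else 0) else 1 / 2)
      = edge_weight (edges {..<n}) V E"
    unfolding edge_weight_def edge_factor_def by (rule prod.cong) (auto split: prod.split)
  then show ?thesis by (simp add: pc_prob_def vertex_weight_def pc_pairs_eq_edges)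
qed

lemma vertex_weight_remove:
  assumes "finite W" "i \<in> W"
  shows "vertex_weight W q V = (if i \<in> V then q i else 1 - q i) * vertex_weight (W - {i}) q V"
  unfolding vertex_weight_def using assms by (simp add: prod.remove)

lemma pc_mse_eq:
  assumes "n \<ge> 1"
  shows "pc_mse n \<rho> f = \<rho> * pc_expect {..<n} (forced_in \<rho> {0}) (\<lambda>E. (f E - 1)\<^sup>2)
    + (1 - \<rho>) * pc_expect {..<n} (forced_out \<rho> {0}) (\<lambda>E. (f E)\<^sup>2)"
proof -
  let ?W = "{..<n}"
  have W0: "0 \<in> ?W" using assms by auto
  define S where "S c V = (\<Sum>E\<in>Pow (edges ?W). edge_weight (edges ?W) V E * (f E - c)\<^sup>2)" for c V
  have rest: "vertex_weight (?W - {0}) (forced_in \<rho> {0}) V = vertex_weight (?W - {0}) (\<lambda>_. \<rho>) V"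
    "vertex_weight (?W - {0}) (forced_out \<rho> {0}) V = vertex_weight (?W - {0}) (\<lambda>_. \<rho>) V" for V
    by (rule vertex_weight_cong, simp add: forced_in_def forced_out_def)+
  have "pc_mse n \<rho> f = (\<Sum>V\<in>Pow ?W. vertex_weight ?W (\<lambda>_. \<rho>) V * S (if 0 \<in> V then 1 else 0) V)"
    unfolding pc_mse_def pc_prob_eq pc_pairs_eq_edges S_def by (simp add: sum_distrib_left mult.assoc)
  also have "\<dots> = (\<Sum>V\<in>Pow ?W. \<rho> * (vertex_weight ?W (forced_in \<rho> {0}) V * S 1 V)
      + (1 - \<rho>) * (vertex_weight ?W (forced_out \<rho> {0}) V * S 0 V))"
  proof (intro sum.cong refl)
    fix V
    show "vertex_weight ?W (\<lambda>_. \<rho>) V * S (if 0 \<in> V then 1 else 0) V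
      = \<rho> * (vertex_weight ?W (forced_in \<rho> {0}) V * S 1 V)
        + (1 - \<rho>) * (vertex_weight ?W (forced_out \<rho> {0}) V * S 0 V)"
      unfolding vertex_weight_remove[OF finite_lessThan W0, of "\<lambda>_. \<rho>"] vertex_weight_remove[OF finite_lessThan W0, of "forced_in \<rho> {0}"]
        vertex_weight_remove[OF finite_lessThan W0, of "forced_out \<rho> {0}"] rest
      by (simp add: forced_in_def forced_out_def)
  qed
  also have "\<dots> = \<rho> * pc_expect {..<n} (forced_in \<rho> {0}) (\<lambda>E. (f E - 1)\<^sup>2)
      + (1 - \<rho>) * pc_expect {..<n} (forced_out \<rho> {0}) (\<lambda>E. (f E)\<^sup>2)"
    unfolding pc_expect_def S_def by (simp add: sum.distrib sum_distrib_left)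
  finally show ?thesis .
qed

lemma finite_pc_monomials: "finite (pc_monomials n D)"
proof -
  let ?P = "pc_pairs n"
  have fP: "finite ?P" by (simp add: pc_pairs_eq_edges)
  have "pc_monomials n D \<subseteq> (\<lambda>f e. if e \<in> ?P then f e else 0) ` PiE ?P (\<lambda>_. {..D})"
  proof
    fix \<alpha> assume \<alpha>: "\<alpha> \<in> pc_monomials n D"
    have "\<alpha> e \<le> D" if "e \<in> ?P" for e
      using member_le_sum[OF that, of \<alpha>] fP \<alpha> by (auto simp: pc_monomials_def)
    then have "restrict \<alpha> ?P \<in> PiE ?P (\<lambda>_. {..D})" by auto
    moreover have "\<alpha> = (\<lambda>e. if e \<in> ?P then restrict \<alpha> ?P e else 0)"
      using \<alpha> by (auto simp: pc_monomials_def)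
    ultimately show "\<alpha> \<in> (\<lambda>f e. if e \<in> ?P then f e else 0) ` PiE ?P (\<lambda>_. {..D})" by blast
  qed
  moreover have "finite (PiE ?P (\<lambda>_. {..D}))" using fP by (intro finite_PiE) auto
  ultimately show ?thesis using finite_subset by blast
qed

lemma pc_poly_low_degree: "pc_poly n D c \<in> low_degree {..<n} D"
proof -
  let ?supp = "\<lambda>\<alpha>. {e\<in>pc_pairs n. \<alpha> e \<noteq> 0}"
  have fP: "finite (pc_pairs n)" by (simp add: pc_pairs_eq_edges)
  have "pc_poly n D c = edge_poly (pc_monomials n D) c ?supp"
    unfolding pc_poly_def edge_poly_def
  proof (intro ext sum.cong refl)
    fix E \<alpha>
    have "(\<Prod>e\<in>pc_pairs n. (if e \<in> E then 1 else 0 :: real) ^ \<alpha> e)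
        = (\<Prod>e\<in>pc_pairs n. if \<alpha> e \<noteq> 0 \<longrightarrow> e \<in> E then 1 else 0)"
      by (rule prod.cong) auto
    then show "c \<alpha> * (\<Prod>e\<in>pc_pairs n. (if e \<in> E then 1 else 0) ^ \<alpha> e)
        = c \<alpha> * (if ?supp \<alpha> \<subseteq> E then 1 else 0)"
      using fP by (auto simp: prod_indicator)
  qed
  moreover have "?supp \<alpha> \<subseteq> edges {..<n} \<and> card (?supp \<alpha>) \<le> D" if "\<alpha> \<in> pc_monomials n D" for \<alpha>
  proof -
    have "card (?supp \<alpha>) \<le> (\<Sum>e\<in>?supp \<alpha>. \<alpha> e)"
      using card_eq_sum[of "?supp \<alpha>"] sum_mono[of "?supp \<alpha>" "\<lambda>_. 1::nat" \<alpha>] by auto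
    also have "\<dots> \<le> (\<Sum>e\<in>pc_pairs n. \<alpha> e)" by (rule sum_mono2) (use fP in auto)
    also have "\<dots> \<le> D" using that by (simp add: pc_monomials_def)
    finally show ?thesis by (auto simp: pc_pairs_eq_edges)
  qed
  ultimately show ?thesis by (simp add: edge_poly_in_low_degree finite_pc_monomials)
qed

text \<open>With \<open>t\<close> the conditional mean of the estimator given \<open>v\<^sub>1 = 1\<close>, the two terms of the
  mean squared error are at least \<open>(t - 1)\<^sup>2\<close> and \<open>t\<^sup>2 / \<beta>\<close>; minimising over \<open>t\<close> gives the bound.\<close>

lemma mixture_square_error_ge:
  fixes \<rho> \<beta> A B t :: real
  assumes "0 < \<rho>" "\<rho> < 1" "\<beta> \<ge> 1" "A \<ge> (t - 1)\<^sup>2" "t\<^sup>2 \<le> \<beta> * B"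
  shows "\<rho> - \<beta> * \<rho>\<^sup>2 \<le> \<rho> * A + (1 - \<rho>) * B"
proof -
  define c where "c = \<rho> * \<beta> + 1 - \<rho>"
  have c1: "c \<ge> 1" using assms by (simp add: c_def)
  have "c * (c * t\<^sup>2 - 2 * \<rho> * \<beta> * t + \<rho>\<^sup>2 * \<beta>\<^sup>2) = (c * t - \<rho> * \<beta>)\<^sup>2 + \<rho>\<^sup>2 * \<beta>\<^sup>2 * (c - 1)"
    by (simp add: power2_eq_square algebra_simps)
  also have "\<dots> \<ge> 0" using c1 by simp
  finally have "0 \<le> c * t\<^sup>2 - 2 * \<rho> * \<beta> * t + \<rho>\<^sup>2 * \<beta>\<^sup>2"
    using c1 by (simp add: zero_le_mult_iff)
  also have "\<dots> = \<beta> * (\<rho> * (t - 1)\<^sup>2 - \<rho> + \<beta> * \<rho>\<^sup>2) + (1 - \<rho>) * t\<^sup>2"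
    by (simp add: c_def power2_eq_square algebra_simps)
  finally have "\<beta> * (\<rho> - \<beta> * \<rho>\<^sup>2) \<le> \<beta> * (\<rho> * (t - 1)\<^sup>2) + (1 - \<rho>) * t\<^sup>2"
    by (simp add: algebra_simps)
  also have "\<dots> \<le> \<beta> * (\<rho> * A) + (1 - \<rho>) * (\<beta> * B)"
    using assms by (intro add_mono mult_left_mono) auto
  also have "\<dots> = \<beta> * (\<rho> * A + (1 - \<rho>) * B)" by (simp add: algebra_simps)
  finally show ?thesis using assms(3) by simp
qed

lemma one_plus_power_le_exp: "(z::real) \<ge> 0 \<Longrightarrow> (1 + z) ^ n \<le> exp (real n * z)"
  using power_mono[of "1 + z" "exp z" n] by (simp add: exp_of_nat_mult)

lemma sum_touched_power_le_conditioned: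
  fixes \<rho> L L0 :: real and n D1 d :: nat
  assumes \<rho>: "0 \<le> \<rho>" and L0: "L0 \<ge> 0" and L: "L \<ge> 0" "(1 - \<rho>) * L = 2 * L0"
    and growth: "(1 + \<rho>\<^sup>2 * L * L0) ^ n \<le> 2"
    and count: "\<And>(X :: (nat \<times> nat) set) m. finite X \<Longrightarrow> card X \<le> m\<^sup>2 \<Longrightarrow> m \<le> 2 * D1 \<Longrightarrow>
      real (card {B\<in>Pow X. card B \<le> d}) \<le> L0 ^ m"
    and W: "finite W" "card W \<le> n" "T \<subseteq> W" "T \<noteq> {}" "card T \<le> D1" "d \<le> D1"
  shows "(\<Sum>B\<in>{B\<in>Pow (edges W - edges (W - T)). card B \<le> d}. (\<rho>\<^sup>2 * L) ^ card (touched (W - T) B))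
    \<le> (1 - \<rho>) ^ card T * L ^ card T"
proof -
  have "card T \<ge> 1" using W finite_subset by (fastforce simp: Suc_le_eq card_gt_0_iff)
  then have two: "(2::real) \<le> 2 ^ card T" using power_increasing[of 1 "card T" "2::real"] by simp
  have "(\<Sum>B\<in>{B\<in>Pow (edges W - edges (W - T)). card B \<le> d}. (\<rho>\<^sup>2 * L) ^ card (touched (W - T) B))
      \<le> L0 ^ card T * (1 + \<rho>\<^sup>2 * L * L0) ^ n"
    by (rule sum_touched_power_le) (use W \<rho> L L0 count in auto)
  also have "\<dots> \<le> L0 ^ card T * 2 ^ card T"
    using growth two L0 by (intro mult_left_mono) auto
  also have "\<dots> = (2 * L0) ^ card T" by (simp add: power_mult_distrib mult.commute)
  also have "\<dots> = ((1 - \<rho>) * L) ^ card T" by (simp only: L(2))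
  finally show ?thesis by (simp add: power_mult_distrib)
qed

lemma walsh_weight_bounds:
  fixes \<rho> L0 :: real and n :: nat
  assumes \<rho>: "0 < \<rho>" "\<rho> \<le> 1/2" and L0: "L0 \<ge> 1" and small: "4 * (real n * \<rho>\<^sup>2 * L0\<^sup>2) \<le> ln 2"
  defines "L \<equiv> 2 * L0 / (1 - \<rho>)"
  shows "0 \<le> L" "(1 - \<rho>) * L = 2 * L0" "(1 + \<rho>\<^sup>2 * L * L0) ^ n \<le> 2"
    and "(1 + \<rho>\<^sup>2 * L) ^ n \<le> exp (4 * (real n * \<rho>\<^sup>2 * L0\<^sup>2))"
proof -
  show L: "0 \<le> L" "(1 - \<rho>) * L = 2 * L0" using \<rho> L0 by (auto simp: L_def)
  have "L \<le> 4 * L0" using \<rho> L0 by (auto simp: L_def field_simps)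
  have y: "0 \<le> real n * \<rho>\<^sup>2" by simp
  have "L0 \<le> L0\<^sup>2" using L0 by (simp add: power2_eq_square)
  have "real n * \<rho>\<^sup>2 * L \<le> real n * \<rho>\<^sup>2 * (4 * L0\<^sup>2)"
    using \<open>L \<le> 4 * L0\<close> \<open>L0 \<le> L0\<^sup>2\<close> y by (intro mult_left_mono) auto
  moreover have "real n * \<rho>\<^sup>2 * (L * L0) \<le> real n * \<rho>\<^sup>2 * (4 * L0 * L0)"
    using \<open>L \<le> 4 * L0\<close> L L0 y by (intro mult_left_mono mult_right_mono) auto
  ultimately have x: "real n * \<rho>\<^sup>2 * L \<le> 4 * (real n * \<rho>\<^sup>2 * L0\<^sup>2)"
    "real n * \<rho>\<^sup>2 * L * L0 \<le> 4 * (real n * \<rho>\<^sup>2 * L0\<^sup>2)"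
    by (simp_all add: power2_eq_square mult_ac)
  show "(1 + \<rho>\<^sup>2 * L * L0) ^ n \<le> 2"
    using one_plus_power_le_exp[of "\<rho>\<^sup>2 * L * L0" n] x(2) small L L0
    by (smt (verit) exp_ln exp_mono mult.assoc zero_le_mult_iff zero_le_power2)
  show "(1 + \<rho>\<^sup>2 * L) ^ n \<le> exp (4 * (real n * \<rho>\<^sup>2 * L0\<^sup>2))"
    using one_plus_power_le_exp[of "\<rho>\<^sup>2 * L" n] x(1) L by (simp add: mult.assoc order_trans)
qed

lemma conditional_first_moment_le:
  fixes n D D1 :: nat and \<rho> L0 :: real
  assumes \<rho>: "0 < \<rho>" "\<rho> \<le> 1/2" and L0: "L0 \<ge> 1" and DD: "D \<le> D1"
    and count: "\<And>(X :: (nat \<times> nat) set) m d. finite X \<Longrightarrow> card X \<le> m\<^sup>2 \<Longrightarrow> m \<le> 2 * D1 \<Longrightarrow> d \<le> D1 \<Longrightarrow>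
      real (card {B\<in>Pow X. card B \<le> d}) \<le> L0 ^ m"
    and small: "4 * (real n * \<rho>\<^sup>2 * L0\<^sup>2) \<le> ln 2"
    and h: "h \<in> low_degree {..<n} D" and n: "n \<ge> 1"
  shows "(pc_expect {..<n} (forced_in \<rho> {0}) h)\<^sup>2
    \<le> exp (4 * (real n * \<rho>\<^sup>2 * L0\<^sup>2)) * pc_expect {..<n} (forced_out \<rho> {0}) (\<lambda>E. (h E)\<^sup>2)"
proof -
  define L where "L = 2 * L0 / (1 - \<rho>)"
  note L = walsh_weight_bounds[OF \<rho> L0 small, folded L_def]
  obtain I :: "(nat \<times> nat) set set" and a where h_eq: "h = edge_poly I a id" "finite I"
    and I: "\<forall>S\<in>I. S \<subseteq> edges {..<n} \<and> card S \<le> D"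
    using h by (auto simp: low_degree_def)
  interpret conditioning "{..<n}" "{0}" I a id D \<rho>
    by unfold_locales (use n h_eq I in auto)
  have "(pc_expect {..<n} (forced_in \<rho> {0}) h)\<^sup>2
      \<le> (\<Sum>B\<in>Bs. (\<rho>\<^sup>2 * L) ^ card (touched W' B)) * pc_expect {..<n} (forced_out \<rho> {0}) (\<lambda>E. (h E)\<^sup>2)"
    unfolding h_eq(1)
  proof (rule pc_expect_forced_in_square_le)
    fix B assume B: "B \<in> Bs"
    show "(pc_expect W' (forced_in \<rho> (touched W' B)) (gb B))\<^sup>2
      \<le> L ^ card (touched W' B) * pc_expect W' (\<lambda>_. \<rho>) (\<lambda>E. (gb B E)\<^sup>2)"
      using B DD \<rho> L L0 card_touched_le[OF finite_W, of B "{0}"] card_mono[OF finite_W, of W']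
      by (intro low_degree_conditional_bound[where n = n and Dmax = D1 and d = "D - card B"]
          sum_touched_power_le_conditioned[OF _ _ _ _ L(3) count] walsh_coeff_low_degree)
         (auto simp: touched_def)
  qed (use \<rho> L in auto)
  also have "\<dots> \<le> exp (4 * (real n * \<rho>\<^sup>2 * L0\<^sup>2)) * pc_expect {..<n} (forced_out \<rho> {0}) (\<lambda>E. (h E)\<^sup>2)"
  proof (rule mult_right_mono)
    have "(\<Sum>B\<in>Bs. (\<rho>\<^sup>2 * L) ^ card (touched W' B)) \<le> (1 + \<rho>\<^sup>2 * L) ^ n"
      by (rule sum_touched_power_star_le) (use L in auto)
    also have "\<dots> \<le> exp (4 * (real n * \<rho>\<^sup>2 * L0\<^sup>2))" by (rule L(4))
    finally show "(\<Sum>B\<in>Bs. (\<rho>\<^sup>2 * L) ^ card (touched W' B)) \<le> exp (4 * (real n * \<rho>\<^sup>2 * L0\<^sup>2))" .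
    show "0 \<le> pc_expect {..<n} (forced_out \<rho> {0}) (\<lambda>E. (h E)\<^sup>2)"
      by (rule pc_expect_nonneg) (use \<rho> in \<open>auto simp: forced_out_def\<close>)
  qed
  finally show ?thesis .
qed

lemma MMSE_le_ge:
  fixes n D D1 :: nat and \<rho> L0 :: real
  assumes n: "n \<ge> 1" and \<rho>: "0 < \<rho>" "\<rho> \<le> 1/2" and L0: "L0 \<ge> 1" and DD: "D \<le> D1"
    and count: "\<And>(X :: (nat \<times> nat) set) m d. finite X \<Longrightarrow> card X \<le> m\<^sup>2 \<Longrightarrow> m \<le> 2 * D1 \<Longrightarrow> d \<le> D1 \<Longrightarrow>
      real (card {B\<in>Pow X. card B \<le> d}) \<le> L0 ^ m"
    and small: "4 * (real n * \<rho>\<^sup>2 * L0\<^sup>2) \<le> ln 2"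
  shows "\<rho> - exp (4 * (real n * \<rho>\<^sup>2 * L0\<^sup>2)) * \<rho>\<^sup>2 \<le> MMSE_le n \<rho> D"
  unfolding MMSE_le_def
proof (rule cINF_greatest)
  fix c
  let ?h = "pc_poly n D c" and ?\<beta> = "exp (4 * (real n * \<rho>\<^sup>2 * L0\<^sup>2))"
  have probs: "\<And>i. i \<in> {..<n} \<Longrightarrow> 0 \<le> forced_in \<rho> {0} i \<and> forced_in \<rho> {0} i \<le> 1"
    using \<rho> by (auto simp: forced_in_def)
  have "(pc_expect {..<n} (forced_in \<rho> {0}) ?h - 1)\<^sup>2 \<le> pc_expect {..<n} (forced_in \<rho> {0}) (\<lambda>E. (?h E - 1)\<^sup>2)"
    using pc_expect_square_le[OF finite_lessThan probs, where h = "\<lambda>E. ?h E - 1"] by (simp add: pc_expect_shift)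
  moreover have "(pc_expect {..<n} (forced_in \<rho> {0}) ?h)\<^sup>2 \<le> ?\<beta> * pc_expect {..<n} (forced_out \<rho> {0}) (\<lambda>E. (?h E)\<^sup>2)"
    by (rule conditional_first_moment_le[OF \<rho> L0 DD count small pc_poly_low_degree n])
  ultimately show "\<rho> - ?\<beta> * \<rho>\<^sup>2 \<le> pc_mse n \<rho> ?h"
    unfolding pc_mse_eq[OF n] using \<rho> by (intro mixture_square_error_ge) auto
qed simp

section \<open>Asymptotics\<close>

lemma sum_binomial_le_power: "(\<Sum>j\<le>d. p choose j) \<le> (p + 1) ^ d"
proof -
  have "(\<Sum>j\<le>d. p choose j) \<le> (\<Sum>j\<le>d. (d choose j) * p ^ j)"
  proof (rule sum_mono)
    fix j assume "j \<in> {..d}"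
    then have "1 \<le> d choose j" by (simp add: Suc_le_eq zero_less_binomial)
    then have "p ^ j \<le> (d choose j) * p ^ j" by simp
    moreover have "p choose j \<le> p ^ j" by (cases "j \<le> p") (auto simp: binomial_le_pow binomial_eq_0)
    ultimately show "p choose j \<le> (d choose j) * p ^ j" by linarith
  qed
  also have "\<dots> = (p + 1) ^ d" using binomial_ring[of p 1 d] by simp
  finally show ?thesis .
qed

lemma card_small_subsets_le:
  assumes "finite X"
  shows "card {B\<in>Pow X. card B \<le> d} \<le> 2 ^ card X" "card {B\<in>Pow X. card B \<le> d} \<le> (card X + 1) ^ d"
proof -
  show "card {B\<in>Pow X. card B \<le> d} \<le> 2 ^ card X"
    using card_mono[of "Pow X" "{B\<in>Pow X. card B \<le> d}"] assms by (auto simp: card_Pow)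
  have "{B\<in>Pow X. card B \<le> d} = (\<Union>j\<in>{..d}. {B. B \<subseteq> X \<and> card B = j})" by auto
  then have "card {B\<in>Pow X. card B \<le> d} \<le> (\<Sum>j\<le>d. card {B. B \<subseteq> X \<and> card B = j})"
    by (simp add: card_UN_le)
  also have "\<dots> = (\<Sum>j\<le>d. card X choose j)" using assms by (simp add: n_subsets)
  also have "\<dots> \<le> (card X + 1) ^ d" by (rule sum_binomial_le_power)
  finally show "card {B\<in>Pow X. card B \<le> d} \<le> (card X + 1) ^ d" .
qed

text \<open>Below \<open>m = sqrt D\<close> the bound \<open>2 ^ m\<^sup>2\<close> of the previous lemma is used, above it the bound
  \<open>(m\<^sup>2 + 1) ^ D\<close>; both are at most \<open>exp (m * count_exponent D)\<close>.\<close>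

definition count_exponent :: "nat \<Rightarrow> real" where
  "count_exponent D = sqrt (real D) * ln (8 * real D ^ 2)"

lemma count_exponent_nonneg:
  assumes "D \<ge> 1"
  shows "0 \<le> count_exponent D"
proof -
  have "1 \<le> 8 * real D ^ 2" using assms one_le_power[of "real D" 2] by linarith
  then show ?thesis unfolding count_exponent_def by (intro mult_nonneg_nonneg) auto
qed

lemma card_small_subsets_le_exp_cases:
  fixes D m d :: nat and X :: "'a set"
  assumes D: "D \<ge> 1" and X: "finite X" "card X \<le> m\<^sup>2" and m: "m \<le> 2 * D" and d: "d \<le> D"
  shows "real (card {B\<in>Pow X. card B \<le> d}) \<le> exp (real (m\<^sup>2) * ln 2)"
    and "real (card {B\<in>Pow X. card B \<le> d}) \<le> exp (real D * ln (8 * real D ^ 2))"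
proof -
  let ?c = "real (card {B\<in>Pow X. card B \<le> d})"
  have D2: "1 \<le> real D ^ 2" using D by (simp add: one_le_power)
  have "card {B\<in>Pow X. card B \<le> d} \<le> 2 ^ card X" by (rule card_small_subsets_le(1)[OF X(1)])
  also have "\<dots> \<le> 2 ^ (m\<^sup>2)" using X(2) by (rule power_increasing) simp
  finally have "?c \<le> 2 ^ (m\<^sup>2)" by (metis of_nat_le_iff of_nat_numeral of_nat_power)
  then show "?c \<le> exp (real (m\<^sup>2) * ln 2)" by (subst exp_of_nat_mult) simp
  have "card {B\<in>Pow X. card B \<le> d} \<le> (card X + 1) ^ d" by (rule card_small_subsets_le(2)[OF X(1)])
  then have "?c \<le> real ((card X + 1) ^ d)" by (simp only: of_nat_le_iff)
  also have "\<dots> = (real (card X) + 1) ^ d" by (simp add: add.commute)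
  also have "\<dots> \<le> (real (card X) + 1) ^ D" by (rule power_increasing[OF d]) simp
  also have "\<dots> \<le> (8 * real D ^ 2) ^ D"
  proof (rule power_mono)
    have "real (card X) \<le> real (m\<^sup>2)" using X(2) by (simp only: of_nat_le_iff)
    also have "\<dots> = real m ^ 2" by simp
    also have "\<dots> \<le> (2 * real D) ^ 2" using m by (intro power_mono) auto
    finally show "real (card X) + 1 \<le> 8 * real D ^ 2"
      using D2 by (simp add: power_mult_distrib)
  qed simp
  also have "\<dots> = exp (real D * ln (8 * real D ^ 2))"
    using D2 by (simp only: exp_of_nat_mult exp_ln[of "8 * real D ^ 2"])
  finally show "?c \<le> exp (real D * ln (8 * real D ^ 2))" .
qed

lemma card_small_subsets_le_exp:
  fixes D m d :: nat and X :: "'a set"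
  assumes D: "D \<ge> 1" and X: "finite X" "card X \<le> m\<^sup>2" and m: "m \<le> 2 * D" and d: "d \<le> D"
  shows "real (card {B\<in>Pow X. card B \<le> d}) \<le> exp (count_exponent D) ^ m"
proof -
  let ?l = "ln (8 * real D ^ 2)" and ?r = "sqrt (real D)"
  have "2 \<le> 8 * real D ^ 2" using D one_le_power[of "real D" 2] by linarith
  then have l2: "ln 2 \<le> ?l" by (subst ln_le_cancel_iff) (use D in auto)
  have "0 < ln (2::real)" by simp
  with l2 have l0: "0 \<le> ?l" by linarith
  have rhs: "exp (count_exponent D) ^ m = exp (real m * ?r * ?l)"
    by (simp add: count_exponent_def exp_of_nat_mult[symmetric] mult.assoc)
  note bounds = card_small_subsets_le_exp_cases[OF assms]
  show ?thesis
  proof (cases "real m \<le> ?r")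
    case True
    have "real (m\<^sup>2) * ln 2 \<le> real m * ?r * ?l"
      using True l2 by (simp add: power2_eq_square mult_mono)
    then show ?thesis unfolding rhs using bounds(1) by (meson exp_le_cancel_iff order_trans)
  next
    case False
    have "real D * ?l \<le> real m * ?r * ?l"
      using False l0 mult_right_mono[of ?r "real m" ?r] by (intro mult_right_mono) auto
    then show ?thesis unfolding rhs using bounds(2) by (meson exp_le_cancel_iff order_trans)
  qed
qed

lemma count_exponent_le:
  fixes l \<epsilon> \<eta> :: real and D :: nat
  assumes \<epsilon>: "\<epsilon> > 0" and l: "l \<ge> 1" "ln l \<ge> 7" "ln l / l \<le> \<epsilon> / 10"
    and \<eta>: "0 \<le> \<eta>" "\<eta> \<le> 1" "\<eta> \<le> (\<epsilon> / 10)\<^sup>2" and D: "real D \<le> \<eta> * (l / ln l)\<^sup>2"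
  shows "2 * count_exponent (max D 1) \<le> \<epsilon> * l"
proof -
  define D1 where "D1 = max D 1"
  have lnl: "ln l > 0" using l by linarith
  have "l / ln l \<le> l" using l lnl by (simp add: divide_le_eq)
  then have "real D \<le> l\<^sup>2"
    using D \<eta> order_trans[OF D mult_right_mono[OF \<eta>(2), of "(l / ln l)\<^sup>2"]] lnl l
    by (smt (verit) divide_nonneg_nonneg power_mono zero_le_power2)
  moreover have "1 \<le> l\<^sup>2" using l by (simp add: one_le_power)
  ultimately have D1l: "real D1 \<le> l\<^sup>2" by (simp add: D1_def of_nat_max)
  have D1: "real D1 \<ge> 1" by (simp add: D1_def)
  then have D1sq: "1 \<le> 8 * real D1 ^ 2" using one_le_power[of "real D1" 2] by linarith
  have log_bound: "ln (8 * real D1 ^ 2) \<le> 5 * ln l"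
  proof -
    have "real D1 ^ 2 \<le> l ^ 4" using power_mono[OF D1l, of 2] D1 by (simp flip: power_mult)
    then have "ln (8 * real D1 ^ 2) \<le> ln (8 * l ^ 4)" using D1 by (subst ln_le_cancel_iff) auto
    also have "\<dots> = ln 8 + 4 * ln l" using l by (simp add: ln_mult ln_realpow)
    also have "ln (8::real) \<le> 7" using ln_le_minus_one[of 8] by simp
    finally show ?thesis using l by linarith
  qed
  have "sqrt (real D1) \<le> (\<epsilon> / 10) * (l / ln l)"
  proof (cases "D = 0")
    case True
    then show ?thesis using l lnl by (simp add: D1_def field_simps)
  next
    case False
    then have "real D1 \<le> (\<epsilon> / 10)\<^sup>2 * (l / ln l)\<^sup>2"
      using D mult_right_mono[OF \<eta>(3), of "(l / ln l)\<^sup>2"] by (simp add: D1_def)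
    then have "sqrt (real D1) \<le> sqrt ((\<epsilon> / 10)\<^sup>2 * (l / ln l)\<^sup>2)" by (rule real_sqrt_le_mono)
    also have "\<dots> = (\<epsilon> / 10) * (l / ln l)" using \<epsilon> l lnl by (simp add: real_sqrt_mult)
    finally show ?thesis .
  qed
  then have "2 * (sqrt (real D1) * ln (8 * real D1 ^ 2)) \<le> 2 * (((\<epsilon> / 10) * (l / ln l)) * (5 * ln l))"
    using log_bound D1 \<epsilon> l lnl D1sq by (intro mult_left_mono mult_mono) auto
  also have "\<dots> = \<epsilon> * l" using lnl by (simp add: field_simps)
  finally show ?thesis by (simp add: count_exponent_def D1_def)
qed

lemma eventually_count_exponent_le:
  fixes D :: "nat \<Rightarrow> nat" and \<epsilon> :: real
  assumes \<epsilon>: "\<epsilon> > 0"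
    and D: "(\<lambda>n. real (D n)) \<in> o(\<lambda>n. (ln (real n) / ln (ln (real n)))\<^sup>2)"
  shows "\<forall>\<^sub>F n in sequentially. 2 * count_exponent (max (D n) 1) \<le> \<epsilon> * ln (real n)"
proof -
  define \<eta> where "\<eta> = min 1 ((\<epsilon> / 10)\<^sup>2)"
  have \<eta>: "0 < \<eta>" "\<eta> \<le> 1" "\<eta> \<le> (\<epsilon> / 10)\<^sup>2" using \<epsilon> by (auto simp: \<eta>_def)
  have ln_n: "filterlim (\<lambda>n::nat. ln (real n)) at_top sequentially"
    by (rule filterlim_compose[OF ln_at_top filterlim_real_sequentially])
  have "\<forall>\<^sub>F n in sequentially. real (D n) \<le> \<eta> * (ln (real n) / ln (ln (real n)))\<^sup>2"
    using landau_o.smallD[OF D \<eta>(1)] by eventually_elim simp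
  moreover have "\<forall>\<^sub>F n in sequentially. ln (ln (real n)) \<ge> 7"
    using filterlim_compose[OF ln_at_top ln_n] by (simp add: filterlim_at_top)
  moreover have "\<forall>\<^sub>F n in sequentially. ln (ln (real n)) / ln (real n) < \<epsilon> / 10"
    by (rule order_tendstoD(2)[OF filterlim_compose[OF ln_x_over_x_tendsto_0 ln_n]]) (use \<epsilon> in simp)
  moreover have "\<forall>\<^sub>F n in sequentially. n \<ge> 3" by (rule eventually_ge_at_top)
  ultimately show ?thesis
  proof eventually_elim
    case (elim n)
    have "ln (real n) > 0" using elim(4) by simp
    then have "ln (real n) \<ge> 1"
      using elim(2) ln_gt_zero_imp_gt_one[of "ln (real n)"] by fastforce
    then show ?case using elim \<epsilon> \<eta> by (intro count_exponent_le) auto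
  qed
qed

lemma sparse_density:
  fixes k \<epsilon> N :: real
  assumes \<epsilon>: "\<epsilon> > 0" and N: "N \<ge> 16" and k: "0 < k" "k \<le> N powr (1/2 - \<epsilon>)"
  shows "k / N \<le> 1/2" "N * (k / N)\<^sup>2 \<le> N powr (-2 * \<epsilon>)"
proof -
  have "k \<le> N powr (1/2)" using k N \<epsilon> by (smt (verit) powr_mono)
  also have "\<dots> = sqrt N" using N by (simp add: powr_half_sqrt)
  also have "\<dots> \<le> N / 2"
  proof -
    have "4 \<le> sqrt N" using N real_sqrt_le_mono[of 16 N] by simp
    then have "4 * sqrt N \<le> sqrt N * sqrt N" using N by (intro mult_right_mono) auto
    then show ?thesis using N by simp
  qed
  finally show "k / N \<le> 1/2" using N by (simp add: divide_le_eq)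
  have "k\<^sup>2 \<le> (N powr (1/2 - \<epsilon>))\<^sup>2" using k by (intro power_mono) auto
  also have "\<dots> = N powr (1 - 2 * \<epsilon>)" by (simp add: power2_eq_square flip: powr_add)
  finally have "N * (k / N)\<^sup>2 \<le> N powr (1 - 2 * \<epsilon>) / N"
    using N by (simp add: power2_eq_square divide_le_eq field_simps)
  also have "\<dots> = N powr (-2 * \<epsilon>)" using N powr_diff[of N "1 - 2 * \<epsilon>" 1] by simp
  finally show "N * (k / N)\<^sup>2 \<le> N powr (-2 * \<epsilon>)" .
qed

lemma MMSE_le_sparse_ge:
  fixes n D :: nat and k \<epsilon> :: real
  assumes \<epsilon>: "\<epsilon> > 0" and n: "n \<ge> 16" and k: "0 < k" "k \<le> real n powr (1/2 - \<epsilon>)"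
    and D: "2 * count_exponent (max D 1) \<le> \<epsilon> * ln (real n)"
    and small: "4 * real n powr (-\<epsilon>) \<le> ln 2"
  shows "k / real n - exp (4 * real n powr (-\<epsilon>)) * (k / real n)\<^sup>2 \<le> MMSE_le n (k / real n) D"
proof -
  define \<rho> where "\<rho> = k / real n"
  define L0 where "L0 = exp (count_exponent (max D 1))"
  have N: "real n \<ge> 16" using n by simp
  have \<rho>: "0 < \<rho>" "\<rho> \<le> 1/2" "real n * \<rho>\<^sup>2 \<le> real n powr (-2 * \<epsilon>)"
    using sparse_density[OF \<epsilon> N k] k n by (auto simp: \<rho>_def)
  have L0: "L0 \<ge> 1" using count_exponent_nonneg[of "max D 1"] by (simp add: L0_def)
  have "L0\<^sup>2 = exp (2 * count_exponent (max D 1))" by (simp add: L0_def power2_eq_square flip: exp_add)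
  also have "\<dots> \<le> real n powr \<epsilon>" using D N by (simp add: powr_def mult.commute)
  finally have "real n * \<rho>\<^sup>2 * L0\<^sup>2 \<le> real n powr (-2 * \<epsilon>) * real n powr \<epsilon>"
    using \<rho> by (intro mult_mono) auto
  also have "\<dots> = real n powr (-\<epsilon>)" by (simp flip: powr_add)
  finally have x: "real n * \<rho>\<^sup>2 * L0\<^sup>2 \<le> real n powr (-\<epsilon>)" .
  have "\<rho> - exp (4 * (real n * \<rho>\<^sup>2 * L0\<^sup>2)) * \<rho>\<^sup>2 \<le> MMSE_le n \<rho> D"
  proof (rule MMSE_le_ge[OF _ \<rho>(1,2) L0 max.cobounded1])
    show "real (card {B\<in>Pow X. card B \<le> d}) \<le> L0 ^ m"
      if "finite X" "card X \<le> m\<^sup>2" "m \<le> 2 * max D 1" "d \<le> max D 1" for X :: "(nat \<times> nat) set" and m d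
      unfolding L0_def by (rule card_small_subsets_le_exp) (use that in auto)
  qed (use n small x in auto)
  moreover have "exp (4 * (real n * \<rho>\<^sup>2 * L0\<^sup>2)) * \<rho>\<^sup>2 \<le> exp (4 * real n powr (-\<epsilon>)) * \<rho>\<^sup>2"
    using x by (intro mult_right_mono) auto
  ultimately show ?thesis by (simp add: \<rho>_def)
qed

theorem mainTheorem8:
  fixes k :: "nat \<Rightarrow> real" and D :: "nat \<Rightarrow> nat" and \<epsilon> :: real
  assumes eps: "\<epsilon> > 0"
    and kpos: "\<forall>n\<ge>1. k n > 0"
    and kle: "\<forall>n\<ge>1. k n \<le> real n powr (1/2 - \<epsilon>)"
    and Dsmall: "(\<lambda>n. real (D n)) \<in> o(\<lambda>n. (ln (real n) / ln (ln (real n)))\<^sup>2)"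
  shows "\<exists>g :: nat \<Rightarrow> real. g \<longlonglongrightarrow> 0 \<and>
           (\<forall>\<^sub>F n in sequentially.
              MMSE_le n (k n / real n) (D n) \<ge>
                k n / real n - (1 + g n) * (k n / real n)\<^sup>2)"
proof -
  define g where "g n = exp (4 * real n powr (-\<epsilon>)) - 1" for n :: nat
  have u: "(\<lambda>n. real n powr (-\<epsilon>)) \<longlonglongrightarrow> 0"
    by (intro tendsto_neg_powr filterlim_real_sequentially) (use eps in auto)
  have "g \<longlonglongrightarrow> exp (4 * 0) - 1" unfolding g_def by (intro tendsto_intros u)
  then have g0: "g \<longlonglongrightarrow> 0" by simp
  have "\<forall>\<^sub>F n in sequentially. 4 * real n powr (-\<epsilon>) \<le> ln 2"
    using order_tendstoD(2)[OF u, of "ln 2 / 4"] by (simp add: eventually_mono)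
  then have "\<forall>\<^sub>F n in sequentially. k n / real n - (1 + g n) * (k n / real n)\<^sup>2 \<le> MMSE_le n (k n / real n) (D n)"
    using eventually_count_exponent_le[OF eps Dsmall] eventually_ge_at_top[of 16]
  proof eventually_elim
    case (elim n)
    then show ?case using MMSE_le_sparse_ge[OF eps, of n "k n" "D n"] kpos kle by (simp add: g_def)
  qed
  with g0 show ?thesis by blast
qed

end
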